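(* Let $L=\langle w_0,\dots,w_l\rangle^\perp\subseteq\mathbb{Z}^N$ be a $p/q$-changemaker lattice with stable coefficients $(\rho_1,\dots,\rho_t)$, $2\le\rho_1\le\dots\le\rho_t$. Let $\phi:L\to\mathbb{Z}^N$ be an isometric embedding such that $\phi(L)=\langle w_0',\dots,w_l'\rangle^\perp\subseteq\mathbb{Z}^N$ is a $p/q$-changemaker lattice. If $p/q\ge 2+2\rho_t+\sum_{i=1}^t\rho_i^2$, then $w_0$ and $w_0'$ have the same changemaker coefficients.
   Context: $p/q$-changemaker lattice ($p/q>0$): write $p/q=[a_0,\dots,a_l]^-=a_0-1/(a_1-1/(\cdots-1/a_l))$ with $a_0\ge1$, $a_i\ge2$ for $i\ge1$. Vectors $w_0,\dots,w_l\in\mathbb{Z}^N$ with $w_i\cdot w_i=a_i$, $w_i\cdot w_j=-1$ if $|i-j|=1$, $0$ if $|i-j|>1$, and an orthonormal basis $e_1,\dots,e_N$ such that: (I) there is a non-decreasing tuple $(\sigma_1,\dots,\sigma_t)$ of positive integers satisfying the changemaker condition (every $1\le m\le\sum\sigma_i$ is a sum of a subset of the $\sigma_i$) with $w_0=\sum_{i\le t}\sigma_ie_i$ if $l=0$ and $w_0=e_{t+1}+\sum_{i\le t}\sigma_ie_i$ if $l>0$; (II) $|w_k\cdot e_i|\le1$ for $k\ge1$; (III) for $i<j$, $w_i\cdot w_j=-|I_i\cap I_j|$ with $I_k=\{e_j:w_k\cdot e_j\neq0\}$; (IV) each $e_i$ pairs non-trivially with some $w_k$. Then $\langle w_0,\dots,w_l\rangle^\perp$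 is a $p/q$-changemaker lattice; the $\sigma_i$ are the changemaker coefficients (of $w_0$) and those $\sigma_i>1$ the stable coefficients. *)

theory Defs
  imports Complex_Main
begin

text \<open>Vectors of Z^N are modelled as functions nat => int vanishing at indices >= N
  (coordinates 0..N-1).\<close>

definition ZN :: "nat \<Rightarrow> (nat \<Rightarrow> int) set" where
  "ZN N = {v. \<forall>i\<ge>N. v i = 0}"

definition ip :: "nat \<Rightarrow> (nat \<Rightarrow> int) \<Rightarrow> (nat \<Rightarrow> int) \<Rightarrow> int" where
  "ip N v u = (\<Sum>i<N. v i * u i)"

fun hjcf :: "int list \<Rightarrow> rat" where
  "hjcf [] = 0"
| "hjcf [x] = of_int x"
| "hjcf (x # y # ys) = of_int x - 1 / hjcf (y # ys)"

definition changemaker :: "int list \<Rightarrow> bool" where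
  "changemaker \<sigma> \<longleftrightarrow>
     (\<forall>m::int. 1 \<le> m \<and> m \<le> sum_list \<sigma> \<longrightarrow>
        (\<exists>S \<subseteq> {..<length \<sigma>}. (\<Sum>i\<in>S. \<sigma> ! i) = m))"

definition orthonormal_basis :: "nat \<Rightarrow> (nat \<Rightarrow> nat \<Rightarrow> int) \<Rightarrow> bool" where
  "orthonormal_basis N e \<longleftrightarrow>
     (\<forall>i\<in>{1..N}. e i \<in> ZN N) \<and>
     (\<forall>i\<in>{1..N}. \<forall>j\<in>{1..N}. ip N (e i) (e j) = (if i = j then 1 else 0)) \<and>
     (\<forall>v\<in>ZN N. v = (\<lambda>c. \<Sum>i=1..N. ip N v (e i) * e i c))"

definition perp :: "nat \<Rightarrow> nat \<Rightarrow> (nat \<Rightarrow> nat \<Rightarrow> int) \<Rightarrow> (nat \<Rightarrow> int) set" where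
  "perp N l w = {x \<in> ZN N. \<forall>k\<le>l. ip N x (w k) = 0}"

text \<open>Data of a p/q-changemaker lattice: r = p/q, a = [a_0,...,a_l] its expansion,
  vectors w_0..w_l, orthonormal basis e_1..e_N, changemaker coefficients sigma
  (sigma ! (i-1) is sigma_i).\<close>
definition cm_data :: "nat \<Rightarrow> rat \<Rightarrow> int list \<Rightarrow> (nat \<Rightarrow> nat \<Rightarrow> int)
    \<Rightarrow> (nat \<Rightarrow> nat \<Rightarrow> int) \<Rightarrow> int list \<Rightarrow> bool" where
  "cm_data N r a w e \<sigma> \<longleftrightarrow>
     (let l = length a - 1; t = length \<sigma> in
      r > 0 \<and> a \<noteq> [] \<and> hjcf a = r \<and> a ! 0 \<ge> 1 \<and> (\<forall>i\<in>{1..l}. a ! i \<ge> 2) \<and>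
      (\<forall>k\<le>l. w k \<in> ZN N) \<and>
      (\<forall>k\<le>l. ip N (w k) (w k) = a ! k) \<and>
      (\<forall>j\<le>l. \<forall>k\<le>l. (j + 1 = k \<or> k + 1 = j) \<longrightarrow> ip N (w j) (w k) = -1) \<and>
      (\<forall>j\<le>l. \<forall>k\<le>l. (j + 1 < k \<or> k + 1 < j) \<longrightarrow> ip N (w j) (w k) = 0) \<and>
      orthonormal_basis N e \<and>
      \<comment> \<open>(I)\<close>
      sorted \<sigma> \<and> (\<forall>x\<in>set \<sigma>. x > 0) \<and> changemaker \<sigma> \<and>
      (if l = 0 then t \<le> N \<and> w 0 = (\<lambda>c. \<Sum>i<t. \<sigma> ! i * e (i + 1) c)
       else t + 1 \<le> N \<and> w 0 = (\<lambda>c. e (t + 1) c + (\<Sum>i<t. \<sigma> ! i * e (i + 1) c))) \<and>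
      \<comment> \<open>(II)\<close>
      (\<forall>k\<in>{1..l}. \<forall>i\<in>{1..N}. \<bar>ip N (w k) (e i)\<bar> \<le> 1) \<and>
      \<comment> \<open>(III)\<close>
      (\<forall>i j. i < j \<and> j \<le> l \<longrightarrow>
         ip N (w i) (w j) =
           - int (card {c\<in>{1..N}. ip N (w i) (e c) \<noteq> 0 \<and> ip N (w j) (e c) \<noteq> 0})) \<and>
      \<comment> \<open>(IV)\<close>
      (\<forall>i\<in>{1..N}. \<exists>k\<le>l. ip N (w k) (e i) \<noteq> 0))"

definition stable_coeffs :: "int list \<Rightarrow> int list" where
  "stable_coeffs \<sigma> = filter (\<lambda>x. x > 1) \<sigma>"

definition isometric_embedding :: "nat \<Rightarrow> (nat \<Rightarrow> int) set \<Rightarrow> ((nat \<Rightarrow> int) \<Rightarrow> (nat \<Rightarrow> int)) \<Rightarrow> bool" where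
  "isometric_embedding N L \<phi> \<longleftrightarrow>
     (\<forall>x\<in>L. \<phi> x \<in> ZN N) \<and>
     (\<forall>x\<in>L. \<forall>y\<in>L. \<phi> (\<lambda>c. x c + y c) = (\<lambda>c. \<phi> x c + \<phi> y c)) \<and>
     (\<forall>x\<in>L. \<forall>y\<in>L. ip N (\<phi> x) (\<phi> y) = ip N x y)"

end

theory Submission
  imports Defs "HOL-Library.Multiset"
begin

text \<open>
  Write W c = w_0 \<cdot> e_c. Since p/q \<le> a_0 = \<Sum>_c (W c)^2, the bound on p/q leaves at least 2 + 2\<rho>_t
  coordinates c with W c = 1 on which w_1, ..., w_l vanish. Fix one of them, i_0, and call the
  others J. Then e_j - e_{i_0} (j \<in> J) lies in L, and so does e_s - \<Sum>_{c \<in> T} e_c for every stable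
  coordinate s and any T \<subseteq> J with |T| = W s. The images under \<phi> of the first family are at least
  four norm-2 vectors pairing pairwise to 1, so they share a pivot: they are \<alpha> e'_p + \<beta>_j e'_{h j}.
  Pairing against them forces the images of the second family into the shape
  \<gamma>_s e'_{g s} - \<Sum>_{j \<in> T} \<beta>_j e'_{h j}. Orthogonality to w'_0 then gives w'_0 \<cdot> e'_{h j} = \<lambda> and
  w'_0 \<cdot> e'_{g s} = \<lambda> W s with \<lambda> = w'_0 \<cdot> e'_p \<ge> 1, and comparing |w'_0|^2 = a_0 = |w_0|^2 forces
  \<lambda> = 1 and leaves no other coordinate of w'_0 of size at least 2. So the stable coefficients
  agree; the number of coefficients agrees as well, since N is determined by it and a_1, ..., a_l.
\<close>

section \<open>Integer vectors of norm at most two\<close>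

lemma one_le_square_if_nonzero: "(x::int) \<noteq> 0 \<Longrightarrow> 1 \<le> x^2"
  by (simp add: int_one_le_iff_zero_less)

lemma abs_le_1_if_square_le_2:
  assumes "(x::int)^2 \<le> 2"
  shows "\<bar>x\<bar> \<le> 1"
proof (rule ccontr)
  assume "\<not> \<bar>x\<bar> \<le> 1"
  then have "2 * 2 \<le> \<bar>x\<bar> * \<bar>x\<bar>"
    by (intro mult_mono) auto
  then show False
    using assms by (simp add: power2_eq_square)
qed

lemma square_eq_1_if_le_2: "(x::int) \<noteq> 0 \<Longrightarrow> x^2 \<le> 2 \<Longrightarrow> x^2 = 1"
  using abs_le_1_if_square_le_2[of x] by (simp add: abs_square_eq_1)

lemma mult_self_eq_1_if_abs_eq_1: "\<bar>x::int\<bar> = 1 \<Longrightarrow> x * x = 1"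
  by (metis abs_mult_self_eq mult.right_neutral)

lemma abs_le_1_mult_self:
  assumes "\<bar>x::int\<bar> \<le> 1" "x \<noteq> 0"
  shows "x * x = 1"
proof -
  have "x = 1 \<or> x = -1"
    using assms by linarith
  then show ?thesis
    by auto
qed

definition two_coord :: "int \<Rightarrow> 'a \<Rightarrow> int \<Rightarrow> 'a \<Rightarrow> 'a \<Rightarrow> int" where
  "two_coord \<alpha> p \<beta> q x = (if x = p then \<alpha> else 0) + (if x = q then \<beta> else 0)"

lemma two_coord_at:
  assumes "p \<noteq> q"
  shows "two_coord \<alpha> p \<beta> q p = \<alpha>" "two_coord \<alpha> p \<beta> q q = \<beta>"
    "x \<noteq> p \<Longrightarrow> x \<noteq> q \<Longrightarrow> two_coord \<alpha> p \<beta> q x = 0"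
  using assms by (auto simp: two_coord_def)

lemma sum_mult_two_coord:
  assumes "finite A" "p \<in> A" "q \<in> A" "p \<noteq> q" "\<forall>x\<in>A. X x = two_coord \<alpha> p \<beta> q x"
  shows "(\<Sum>x\<in>A. X x * Y x) = \<alpha> * Y p + \<beta> * (Y q :: int)"
proof -
  have "(\<Sum>x\<in>A. X x * Y x) = (\<Sum>x\<in>A. (if x = p then \<alpha> * Y p else 0) + (if x = q then \<beta> * Y q else 0))"
    using assms(5) by (intro sum.cong) (auto simp: two_coord_def distrib_right)
  then show ?thesis
    using assms(1-3) by (simp add: sum.distrib)
qed

lemma sum_square_eq_1:
  fixes X :: "'a \<Rightarrow> int"
  assumes "finite A" "(\<Sum>x\<in>A. (X x)^2) = 1"
  obtains g where "g \<in> A" "\<bar>X g\<bar> = 1" "\<forall>x\<in>A. x \<noteq> g \<longrightarrow> X x = 0"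
proof -
  obtain g where g: "g \<in> A" "X g \<noteq> 0"
    using assms by (metis (mono_tags, lifting) power_zero_numeral sum.neutral zero_neq_one)
  have split: "(\<Sum>x\<in>A. (X x)^2) = (X g)^2 + (\<Sum>x\<in>A-{g}. (X x)^2)"
    using assms g by (simp add: sum.remove)
  moreover have "(\<Sum>x\<in>A-{g}. (X x)^2) \<ge> 0"
    by (simp add: sum_nonneg)
  moreover have "(X g)^2 \<ge> 1"
    using g one_le_square_if_nonzero by blast
  ultimately have "(X g)^2 = 1" "(\<Sum>x\<in>A-{g}. (X x)^2) = 0"
    using assms by linarith+
  moreover from this(2) have "\<forall>x\<in>A-{g}. X x = 0"
    using assms(1) by (simp add: sum_nonneg_eq_0_iff)
  ultimately show ?thesis
    using that g(1) abs_square_eq_1 by blast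
qed

lemma sum_square_eq_2_abs_le_1:
  fixes X :: "'a \<Rightarrow> int"
  assumes "finite A" "(\<Sum>x\<in>A. (X x)^2) = 2" "y \<in> A"
  shows "\<bar>X y\<bar> \<le> 1"
proof -
  have "(X y)^2 \<le> (\<Sum>x\<in>A. (X x)^2)"
    using assms by (intro member_le_sum) auto
  then show ?thesis
    using assms(2) abs_le_1_if_square_le_2 by simp
qed

lemma sum_square_eq_2_shape:
  fixes X :: "'a \<Rightarrow> int"
  assumes "finite A" "(\<Sum>x\<in>A. (X x)^2) = 2" "y \<in> A" "X y = c" "c \<noteq> 0"
  obtains z b where "z \<in> A" "z \<noteq> y" "\<bar>c\<bar> = 1" "\<bar>b\<bar> = 1"
    "\<forall>x\<in>A. X x = two_coord c y b z x"
proof -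
  have "(X y)^2 \<le> (\<Sum>x\<in>A. (X x)^2)"
    using assms by (intro member_le_sum) auto
  then have y1: "c^2 = 1"
    using square_eq_1_if_le_2 assms(2,4,5) by simp
  have "(\<Sum>x\<in>A-{y}. (X x)^2) = 1"
    using assms y1 by (simp add: sum.remove)
  then obtain z where z: "z \<in> A - {y}" "\<bar>X z\<bar> = 1" "\<forall>x\<in>A-{y}. x \<noteq> z \<longrightarrow> X x = 0"
    by (rule sum_square_eq_1[OF finite_Diff[OF assms(1)]])
  have shape: "X x = two_coord c y (X z) z x" if "x \<in> A" for x
  proof (cases "x = y")
    case True
    then show ?thesis
      using z(1) assms(4) by (auto simp: two_coord_def)
  next
    case False
    then show ?thesis
      using z(3) that by (simp add: two_coord_def)
  qed
  moreover have "\<bar>c\<bar> = 1"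
    using y1 by (simp add: abs_square_eq_1)
  ultimately show ?thesis
    using that[of z "X z"] z(1,2) by blast
qed

lemma norm_two_no_mixed_triple:
  fixes X Y Z :: "'a \<Rightarrow> int"
  assumes A: "finite A" "p \<in> A" "q \<in> A" "p \<noteq> q"
    and norm: "(\<Sum>x\<in>A. (X x)^2) = 2" "(\<Sum>x\<in>A. (Y x)^2) = 2" "(\<Sum>x\<in>A. (Z x)^2) = 2"
    and val: "X p = 0" "X q = \<alpha>'" "Y p = \<alpha>" "Y q = 0" "Z p = \<alpha>" "Z q = 0" "\<alpha> \<noteq> 0" "\<alpha>' \<noteq> 0"
    and ip: "(\<Sum>x\<in>A. Y x * Z x) = 1" "(\<Sum>x\<in>A. Y x * X x) = 1" "(\<Sum>x\<in>A. Z x * X x) = 1"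
  shows False
proof -
  obtain z2 b2 where r2: "z2 \<in> A" "z2 \<noteq> p" "\<bar>b2\<bar> = 1" "\<bar>\<alpha>\<bar> = 1"
      "\<forall>x\<in>A. Y x = two_coord \<alpha> p b2 z2 x"
    by (rule sum_square_eq_2_shape[OF A(1) norm(2) A(2) val(3,7)])
  obtain z3 b3 where r3: "z3 \<in> A" "z3 \<noteq> p" "\<bar>b3\<bar> = 1" "\<forall>x\<in>A. Z x = two_coord \<alpha> p b3 z3 x"
    by (rule sum_square_eq_2_shape[OF A(1) norm(3) A(2) val(5,7)])
  obtain z1 b1 where r1: "z1 \<in> A" "z1 \<noteq> q" "\<forall>x\<in>A. X x = two_coord \<alpha>' q b1 z1 x"
    by (rule sum_square_eq_2_shape[OF A(1) norm(1) A(3) val(2,8)])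
  have Yz2: "Y z2 = b2" and Zz3: "Z z3 = b3"
    using r2 r3 two_coord_at[of p z2] two_coord_at[of p z3] by auto
  have "\<alpha> * Z p + b2 * Z z2 = 1"
    using sum_mult_two_coord[OF A(1,2) r2(1) r2(2)[symmetric] r2(5)] ip(1) by simp
  then have "Z z2 = 0"
    using val(5) mult_self_eq_1_if_abs_eq_1[OF r2(4)] r2(3) by auto
  then have z23: "z2 \<noteq> z3"
    using Zz3 r3(3) by auto
  have z_eq: "z = z1" if "z \<in> A" "z \<noteq> p" "\<forall>x\<in>A. V x = two_coord \<alpha> p b z x" "V q = 0"
    "(\<Sum>x\<in>A. V x * X x) = 1" "\<bar>b\<bar> = 1" for V z b
  proof -
    have "\<alpha> * X p + b * X z = 1"
      using sum_mult_two_coord[OF A(1,2) that(1) that(2)[symmetric] that(3)] that(5) by simp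
    then have "X z \<noteq> 0"
      using val(1) by auto
    moreover have "X z = two_coord \<alpha>' q b1 z1 z"
      using r1(3) that(1) by blast
    ultimately have "z = q \<or> z = z1"
      by (auto simp: two_coord_def split: if_splits)
    moreover have "V z = b"
      using that(2,3) two_coord_at[of p z] that(1) by auto
    ultimately show ?thesis
      using that(4,6) by auto
  qed
  have "z2 = z1" "z3 = z1"
    using z_eq[OF r2(1,2,5) val(4) ip(2) r2(3)] z_eq[OF r3(1,2,4) val(6) ip(3) r3(3)] by auto
  then show False
    using z23 by simp
qed

lemma norm_two_family_common_coord:
  fixes u :: "'b \<Rightarrow> 'a \<Rightarrow> int"
  assumes A: "finite A" "p \<in> A" "\<alpha> \<noteq> 0" "J \<noteq> {}"
    and val: "\<forall>j\<in>J. u j p = \<alpha>"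
    and norm: "\<forall>j\<in>J. (\<Sum>x\<in>A. (u j x)^2) = 2"
    and ip: "\<forall>j\<in>J. \<forall>k\<in>J. j \<noteq> k \<longrightarrow> (\<Sum>x\<in>A. u j x * u k x) = 1"
  obtains h \<beta> where "\<bar>\<alpha>\<bar> = 1" "inj_on h J"
    "\<forall>j\<in>J. h j \<in> A \<and> h j \<noteq> p \<and> \<bar>\<beta> j\<bar> = 1 \<and> (\<forall>x\<in>A. u j x = two_coord \<alpha> p (\<beta> j) (h j) x)"
proof -
  have "\<exists>z b. z \<in> A \<and> z \<noteq> p \<and> \<bar>b\<bar> = 1 \<and> \<bar>\<alpha>\<bar> = 1 \<and> (\<forall>x\<in>A. u j x = two_coord \<alpha> p b z x)"
    if "j \<in> J" for j
    using sum_square_eq_2_shape[OF A(1) _ A(2) _ A(3), of "u j"] norm val that by metis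
  then obtain h \<beta> where hb: "\<forall>j\<in>J. h j \<in> A \<and> h j \<noteq> p \<and> \<bar>\<beta> j\<bar> = 1 \<and> \<bar>\<alpha>\<bar> = 1 \<and>
      (\<forall>x\<in>A. u j x = two_coord \<alpha> p (\<beta> j) (h j) x)"
    by metis
  have a1: "\<bar>\<alpha>\<bar> = 1"
    using hb A(4) by blast
  have "inj_on h J"
  proof (rule inj_onI, rule ccontr)
    fix j k assume jk: "j \<in> J" "k \<in> J" "h j = h k" "j \<noteq> k"
    have hj: "h j \<in> A" "h j \<noteq> p" "\<bar>\<beta> j\<bar> = 1" "\<forall>x\<in>A. u j x = two_coord \<alpha> p (\<beta> j) (h j) x"
      and hk: "h k \<in> A" "h k \<noteq> p" "\<bar>\<beta> k\<bar> = 1" "\<forall>x\<in>A. u k x = two_coord \<alpha> p (\<beta> k) (h k) x"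
      using hb jk(1,2) by auto
    have "\<alpha> * u k p + \<beta> j * u k (h j) = 1"
      using sum_mult_two_coord[OF A(1,2) hj(1) hj(2)[symmetric] hj(4), of "u k"] ip jk by simp
    moreover have "u k (h j) = \<beta> k"
      using hk jk(3) two_coord_at[of p "h k"] by simp
    ultimately have "\<beta> j * \<beta> k = 0"
      using val jk mult_self_eq_1_if_abs_eq_1[OF a1] by simp
    then show False
      using hj(3) hk(3) by auto
  qed
  then show ?thesis
    using that hb a1 by blast
qed

lemma norm_two_neighbour_cases:
  fixes X Y :: "'a \<Rightarrow> int"
  assumes A: "finite A" "p \<in> A" "q \<in> A" "p \<noteq> q" "\<bar>\<alpha>\<bar> = 1" "\<bar>\<alpha>'\<bar> = 1"
    and X: "\<forall>x\<in>A. X x = two_coord \<alpha> p \<alpha>' q x"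
    and Y: "(\<Sum>x\<in>A. (Y x)^2) = 2" "(\<Sum>x\<in>A. X x * Y x) = 1"
  shows "(Y p = \<alpha> \<and> Y q = 0) \<or> (Y p = 0 \<and> Y q = \<alpha>')"
proof -
  have "\<alpha> * Y p + \<alpha>' * Y q = 1"
    using sum_mult_two_coord[OF A(1-4) X] Y(2) by simp
  moreover have "\<bar>Y p\<bar> \<le> 1" "\<bar>Y q\<bar> \<le> 1"
    using sum_square_eq_2_abs_le_1[OF A(1) Y(1)] A(2,3) by auto
  ultimately show ?thesis
    using A(5,6) by (auto simp: abs_if split: if_splits)
qed

lemma norm_two_family_one_type:
  fixes u :: "'b \<Rightarrow> 'a \<Rightarrow> int"
  assumes A: "finite A" "p \<in> A" "q \<in> A" "p \<noteq> q" "card J \<ge> 4" "\<alpha> \<noteq> 0" "\<alpha>' \<noteq> 0"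
    and norm: "\<forall>j\<in>J. (\<Sum>x\<in>A. (u j x)^2) = 2"
    and ip: "\<forall>j\<in>J. \<forall>k\<in>J. j \<noteq> k \<longrightarrow> (\<Sum>x\<in>A. u j x * u k x) = 1"
    and j1: "j1 \<in> J" "u j1 p = \<alpha>" "u j1 q = \<alpha>'"
    and types: "\<And>j. j \<in> J \<Longrightarrow> j \<noteq> j1 \<Longrightarrow> (u j p = \<alpha> \<and> u j q = 0) \<or> (u j p = 0 \<and> u j q = \<alpha>')"
  shows "(\<forall>j\<in>J. u j p = \<alpha>) \<or> (\<forall>j\<in>J. u j q = \<alpha>')"
proof (rule ccontr)
  assume "\<not> ?thesis"
  then obtain j2 j3 where j23: "j2 \<in> J" "u j2 p \<noteq> \<alpha>" "j3 \<in> J" "u j3 q \<noteq> \<alpha>'"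
    by blast
  have "j2 \<noteq> j1" "j3 \<noteq> j1"
    using j23 j1 by auto
  then have j2: "j2 \<noteq> j1" "u j2 p = 0" "u j2 q = \<alpha>'" and j3: "j3 \<noteq> j1" "u j3 p = \<alpha>" "u j3 q = 0"
    using j23 types[of j2] types[of j3] by auto
  have "j2 \<noteq> j3"
    using j2 j3 A(6) by auto
  have "card {j1, j2, j3} \<le> 3"
    by (rule card_insert_le_m1) (auto simp: card_insert_le_m1 card_le_Suc0_iff_eq)
  then have "\<not> J \<subseteq> {j1, j2, j3}"
    using A(5) card_mono[of "{j1,j2,j3}" J] by auto
  then obtain j4 where j4: "j4 \<in> J" "j4 \<noteq> j1" "j4 \<noteq> j2" "j4 \<noteq> j3"
    by blast
  from types[OF j4(1,2)] show False
  proof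
    assume "u j4 p = \<alpha> \<and> u j4 q = 0"
    then show False
      using norm_two_no_mixed_triple[OF A(1-4),
          where X = "u j2" and Y = "u j3" and Z = "u j4" and \<alpha> = \<alpha> and \<alpha>' = \<alpha>']
        norm ip j2 j3 A(6,7) j23(1,3) j4 \<open>j2 \<noteq> j3\<close> by auto
  next
    assume "u j4 p = 0 \<and> u j4 q = \<alpha>'"
    then show False
      using norm_two_no_mixed_triple[OF A(1,3,2) A(4)[symmetric],
          where X = "u j3" and Y = "u j2" and Z = "u j4" and \<alpha> = \<alpha>' and \<alpha>' = \<alpha>]
        norm ip j2 j3 A(6,7) j23(1,3) j4 \<open>j2 \<noteq> j3\<close> by auto
  qed
qed

lemma norm_two_family_shared_coord:
  fixes u :: "'b \<Rightarrow> 'a \<Rightarrow> int"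
  assumes A: "finite A" "finite J" "card J \<ge> 4"
    and norm: "\<forall>j\<in>J. (\<Sum>x\<in>A. (u j x)^2) = 2"
    and ip: "\<forall>j\<in>J. \<forall>k\<in>J. j \<noteq> k \<longrightarrow> (\<Sum>x\<in>A. u j x * u k x) = 1"
  obtains p \<alpha> where "p \<in> A" "\<alpha> \<noteq> 0" "\<forall>j\<in>J. u j p = \<alpha>"
proof -
  obtain j1 where j1: "j1 \<in> J"
    using A by fastforce
  have "(\<Sum>x\<in>A. (u j1 x)^2) \<noteq> 0"
    using norm j1 by simp
  then obtain p \<alpha> where p: "p \<in> A" "u j1 p = \<alpha>" "\<alpha> \<noteq> 0"
    by (metis (mono_tags, lifting) power_zero_numeral sum.neutral)
  obtain q \<alpha>' where pq: "q \<in> A" "q \<noteq> p" "\<bar>\<alpha>\<bar> = 1" "\<bar>\<alpha>'\<bar> = 1"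
      "\<forall>x\<in>A. u j1 x = two_coord \<alpha> p \<alpha>' q x"
    by (rule sum_square_eq_2_shape[OF A(1) norm[rule_format, OF j1] p])
  have u1q: "u j1 q = \<alpha>'"
    using pq two_coord_at[OF pq(2)[symmetric]] by auto
  have "\<alpha>' \<noteq> 0"
    using pq(4) by auto
  have "(u j p = \<alpha> \<and> u j q = 0) \<or> (u j p = 0 \<and> u j q = \<alpha>')" if "j \<in> J" "j \<noteq> j1" for j
    using norm_two_neighbour_cases[OF A(1) p(1) pq(1) pq(2)[symmetric] pq(3,4,5)] norm ip j1 that by auto
  then have "(\<forall>j\<in>J. u j p = \<alpha>) \<or> (\<forall>j\<in>J. u j q = \<alpha>')"
    by (intro norm_two_family_one_type[OF A(1) p(1) pq(1) pq(2)[symmetric] A(3) p(3) \<open>\<alpha>' \<noteq> 0\<close>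
          norm ip j1 p(2) u1q])
  then show ?thesis
    using that p(1,3) pq(1) \<open>\<alpha>' \<noteq> 0\<close> by blast
qed

lemma norm_two_family_pivot:
  fixes u :: "'b \<Rightarrow> 'a \<Rightarrow> int"
  assumes A: "finite A" "finite J" "card J \<ge> 4"
    and norm: "\<forall>j\<in>J. (\<Sum>x\<in>A. (u j x)^2) = 2"
    and ip: "\<forall>j\<in>J. \<forall>k\<in>J. j \<noteq> k \<longrightarrow> (\<Sum>x\<in>A. u j x * u k x) = 1"
  obtains p \<alpha> h \<beta> where "p \<in> A" "\<bar>\<alpha>\<bar> = 1" "inj_on h J"
    "\<forall>j\<in>J. h j \<in> A \<and> h j \<noteq> p \<and> \<bar>\<beta> j\<bar> = 1 \<and> (\<forall>x\<in>A. u j x = two_coord \<alpha> p (\<beta> j) (h j) x)"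
proof -
  obtain p \<alpha> where p: "p \<in> A" "\<alpha> \<noteq> 0" "\<forall>j\<in>J. u j p = \<alpha>"
    by (rule norm_two_family_shared_coord[OF A norm ip])
  have "J \<noteq> {}"
    using A by auto
  obtain h \<beta> where "\<bar>\<alpha>\<bar> = 1" "inj_on h J"
    "\<forall>j\<in>J. h j \<in> A \<and> h j \<noteq> p \<and> \<bar>\<beta> j\<bar> = 1 \<and> (\<forall>x\<in>A. u j x = two_coord \<alpha> p (\<beta> j) (h j) x)"
    by (rule norm_two_family_common_coord[OF A(1) p(1,2) \<open>J \<noteq> {}\<close> p(3) norm ip])
  then show ?thesis
    using that p(1) by blast
qed

lemma sum_split_pivot:
  fixes f :: "'a \<Rightarrow> 'c::comm_monoid_add"
  assumes "finite A" "p \<in> A" "inj_on h J" "\<forall>j\<in>J. h j \<in> A \<and> h j \<noteq> p"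
  shows "(\<Sum>x\<in>A. f x) = f p + (\<Sum>j\<in>J. f (h j)) + (\<Sum>x\<in>A - ({p} \<union> h`J). f x)"
proof -
  have B: "{p} \<union> h`J \<subseteq> A"
    using assms by auto
  then have "finite J"
    using finite_imageD[OF finite_subset[OF _ assms(1)] assms(3)] by blast
  have "(\<Sum>x\<in>A. f x) = (\<Sum>x\<in>A - ({p} \<union> h`J). f x) + (\<Sum>x\<in>{p} \<union> h`J. f x)"
    using sum.subset_diff[OF B assms(1)] by simp
  also have "(\<Sum>x\<in>{p} \<union> h`J. f x) = f p + (\<Sum>j\<in>J. f (h j))"
  proof -
    have "p \<notin> h`J"
      using assms(4) by auto
    then show ?thesis
      using \<open>finite J\<close> by (simp add: sum.reindex[OF assms(3)])
  qed
  finally show ?thesis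
    by (simp add: ac_simps)
qed

lemma coord_against_two_coord:
  fixes z :: "'a \<Rightarrow> int"
  assumes "finite A" "p \<in> A" "q \<in> A" "p \<noteq> q" "\<bar>\<beta>\<bar> = 1"
    and "\<forall>x\<in>A. u x = two_coord \<alpha> p \<beta> q x" "(\<Sum>x\<in>A. z x * u x) = - c"
  shows "z q = - \<beta> * (c + \<alpha> * z p)"
proof -
  have "(\<Sum>x\<in>A. u x * z x) = - c"
    using assms(7) by (simp only: mult.commute)
  then have e: "\<alpha> * z p + \<beta> * z q = - c"
    using sum_mult_two_coord[OF assms(1-4,6), of z] by linarith
  have "z q = \<beta> * (\<beta> * z q)"
    using mult_self_eq_1_if_abs_eq_1[OF assms(5)] by (simp add: mult.assoc[symmetric])
  also have "\<beta> * z q = - c - \<alpha> * z p"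
    using e by simp
  finally show ?thesis
    by (simp add: algebra_simps)
qed

lemma coords_against_pivot_family:
  fixes z :: "'a \<Rightarrow> int" and u :: "'b \<Rightarrow> 'a \<Rightarrow> int"
  assumes A: "finite A" "p \<in> A" "\<bar>\<alpha>\<bar> = 1" "inj_on h J" "finite J"
    and hb: "\<forall>j\<in>J. h j \<in> A \<and> h j \<noteq> p \<and> \<bar>\<beta> j\<bar> = 1 \<and> (\<forall>x\<in>A. u j x = two_coord \<alpha> p (\<beta> j) (h j) x)"
    and T: "T \<subseteq> J" "2 * card T + 1 \<le> card J"
    and norm: "(\<Sum>x\<in>A. (z x)^2) = int (card T) + 1"
    and ip: "\<forall>j\<in>J. (\<Sum>x\<in>A. z x * u j x) = - (if j \<in> T then 1 else 0)"
  shows "z p = 0" "\<forall>j\<in>J. z (h j) = - (if j \<in> T then \<beta> j else 0)"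
proof -
  define c where "c = \<alpha> * z p"
  have hJ: "\<forall>j\<in>J. h j \<in> A \<and> h j \<noteq> p"
    using hb by blast
  have zh: "z (h j) = - \<beta> j * ((if j \<in> T then 1 else 0) + c)" if "j \<in> J" for j
    unfolding c_def using hb that by (intro coord_against_two_coord[OF A(1,2)]) (use ip in auto)
  have zh2: "(z (h j))^2 = ((if j \<in> T then 1 else 0) + c)^2" if "j \<in> J" for j
    using hb that by (simp add: zh power_mult_distrib abs_square_eq_1[symmetric])
  have "c = 0"
  proof (rule ccontr)
    assume "c \<noteq> 0"
    then have c1: "c^2 \<ge> 1"
      by (rule one_le_square_if_nonzero)
    have "int (card T) + 1 \<le> int (card J - card T)"
      using T(2) by linarith
    also have "\<dots> \<le> int (card J - card T) * c^2"
      using c1 by (simp add: mult_le_cancel_left1)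
    also have "\<dots> = (\<Sum>j\<in>J-T. (z (h j))^2)"
      using zh2 A(5) T(1) by (simp add: card_Diff_subset finite_subset)
    also have "\<dots> \<le> (\<Sum>j\<in>J. (z (h j))^2)"
      by (rule sum_mono2) (use A(5) in auto)
    finally have "int (card T) + 1 \<le> (\<Sum>j\<in>J. (z (h j))^2)" .
    moreover have "(z p)^2 = c^2"
      unfolding c_def using A(3) by (simp add: power_mult_distrib abs_square_eq_1[symmetric])
    moreover have "(\<Sum>x\<in>A - ({p} \<union> h`J). (z x)^2) \<ge> 0"
      by (simp add: sum_nonneg)
    ultimately show False
      using sum_split_pivot[OF A(1,2,4) hJ, of "\<lambda>x. (z x)^2"] norm c1 by linarith
  qed
  then show "z p = 0"
    using A(3) unfolding c_def by auto
  show "\<forall>j\<in>J. z (h j) = - (if j \<in> T then \<beta> j else 0)"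
    using zh \<open>c = 0\<close> by simp
qed

(* The conclusion for all Y encodes z = \<gamma> e_g - \<Sum>_{j \<in> T} \<beta> j e_{h j}. *)
lemma norm_against_pivot_family:
  fixes z :: "'a \<Rightarrow> int" and u :: "'b \<Rightarrow> 'a \<Rightarrow> int"
  assumes A: "finite A" "p \<in> A" "\<bar>\<alpha>\<bar> = 1" "inj_on h J" "finite J"
    and hb: "\<forall>j\<in>J. h j \<in> A \<and> h j \<noteq> p \<and> \<bar>\<beta> j\<bar> = 1 \<and> (\<forall>x\<in>A. u j x = two_coord \<alpha> p (\<beta> j) (h j) x)"
    and T: "T \<subseteq> J" "2 * card T + 1 \<le> card J"
    and norm: "(\<Sum>x\<in>A. (z x)^2) = int (card T) + 1"
    and ip: "\<forall>j\<in>J. (\<Sum>x\<in>A. z x * u j x) = - (if j \<in> T then 1 else 0)"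
  obtains g \<gamma> where "g \<in> A" "g \<noteq> p" "g \<notin> h`J" "\<bar>\<gamma>\<bar> = 1"
    "\<forall>Y. (\<Sum>x\<in>A. z x * Y x) = \<gamma> * Y g - (\<Sum>j\<in>T. \<beta> j * Y (h j))"
proof -
  note coords = coords_against_pivot_family[OF assms]
  define R where "R = A - ({p} \<union> h`J)"
  have dec: "(\<Sum>x\<in>A. f x) = f p + (\<Sum>j\<in>J. f (h j)) + (\<Sum>x\<in>R. f x)" for f :: "'a \<Rightarrow> int"
    unfolding R_def using hb by (intro sum_split_pivot[OF A(1,2,4)]) blast
  have "(\<Sum>j\<in>J. (z (h j))^2) = (\<Sum>j\<in>J. if j \<in> T then 1 else 0)"
    using coords(2) hb by (intro sum.cong) (auto simp: abs_square_eq_1[symmetric])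
  also have "\<dots> = int (card T)"
    using T(1) A(5) by (simp add: sum.If_cases Int_absorb1)
  finally have "(\<Sum>x\<in>R. (z x)^2) = 1"
    using dec[of "\<lambda>x. (z x)^2"] norm coords(1) by simp
  then obtain g where g: "g \<in> R" "\<bar>z g\<bar> = 1" "\<forall>x\<in>R. x \<noteq> g \<longrightarrow> z x = 0"
    by (rule sum_square_eq_1[OF finite_Diff[OF A(1), of "{p} \<union> h`J"], folded R_def])
  have "(\<Sum>x\<in>A. z x * Y x) = z g * Y g - (\<Sum>j\<in>T. \<beta> j * Y (h j))" for Y
  proof -
    have "(\<Sum>j\<in>J. z (h j) * Y (h j)) = (\<Sum>j\<in>J. if j \<in> T then - (\<beta> j * Y (h j)) else 0)"
      using coords(2) by (intro sum.cong) auto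
    also have "\<dots> = - (\<Sum>j\<in>T. \<beta> j * Y (h j))"
      using T(1) A(5) by (simp add: sum.If_cases Int_absorb1 sum_negf)
    finally have "(\<Sum>j\<in>J. z (h j) * Y (h j)) = - (\<Sum>j\<in>T. \<beta> j * Y (h j))" .
    moreover have "(\<Sum>x\<in>R. z x * Y x) = z g * Y g"
      using g A(1) by (subst sum.remove[of _ g]) (auto simp: R_def intro: sum.neutral)
    ultimately show ?thesis
      using dec[of "\<lambda>x. z x * Y x"] coords(1) by simp
  qed
  then show ?thesis
    using that[of g "z g"] g(1,2) unfolding R_def by blast
qed

section \<open>Inner products in \<open>\<int>\<^sup>N\<close>\<close>

lemma ip_commute: "ip N u v = ip N v u"
  unfolding ip_def by (simp add: mult.commute)

lemma ip_sum_right: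
  assumes "finite C"
  shows "ip N u (\<lambda>x. \<Sum>c\<in>C. k c * f c x) = (\<Sum>c\<in>C. k c * ip N u (f c))"
  unfolding ip_def
  by (simp add: sum_distrib_left sum_distrib_right mult.assoc mult.left_commute sum.swap[of _ C])

lemma ip_add_right: "ip N u (\<lambda>x. f x + g x) = ip N u f + ip N u g"
  unfolding ip_def by (simp add: distrib_left sum.distrib)

lemma orthonormal_basis_ip:
  "orthonormal_basis N e \<Longrightarrow> i \<in> {1..N} \<Longrightarrow> j \<in> {1..N} \<Longrightarrow> ip N (e i) (e j) = (if i = j then 1 else 0)"
  unfolding orthonormal_basis_def by blast

lemma orthonormal_basis_ZN: "orthonormal_basis N e \<Longrightarrow> i \<in> {1..N} \<Longrightarrow> e i \<in> ZN N"
  unfolding orthonormal_basis_def by blast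

lemma ip_eq_sum_coords:
  assumes "orthonormal_basis N e" "v \<in> ZN N"
  shows "ip N u v = (\<Sum>c=1..N. ip N u (e c) * ip N v (e c))"
proof -
  have "v = (\<lambda>x. \<Sum>c=1..N. ip N v (e c) * e c x)"
    using assms unfolding orthonormal_basis_def by blast
  then have "ip N u v = ip N u (\<lambda>x. \<Sum>c=1..N. ip N v (e c) * e c x)"
    by simp
  also have "\<dots> = (\<Sum>c=1..N. ip N v (e c) * ip N u (e c))"
    by (rule ip_sum_right) simp
  finally show ?thesis
    by (simp add: mult.commute)
qed

definition basis_comb :: "nat \<Rightarrow> (nat \<Rightarrow> nat \<Rightarrow> int) \<Rightarrow> (nat \<Rightarrow> int) \<Rightarrow> nat \<Rightarrow> int" where
  "basis_comb N e \<kappa> = (\<lambda>x. \<Sum>c\<in>{1..N}. \<kappa> c * e c x)"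

lemma basis_comb_ZN: "orthonormal_basis N e \<Longrightarrow> basis_comb N e \<kappa> \<in> ZN N"
  unfolding basis_comb_def ZN_def using orthonormal_basis_ZN[of N e] unfolding ZN_def by auto

lemma ip_basis_comb: "ip N (basis_comb N e \<kappa>) u = (\<Sum>c\<in>{1..N}. \<kappa> c * ip N u (e c))"
  unfolding basis_comb_def by (subst ip_commute) (rule ip_sum_right, simp)

lemma ip_basis_comb_basis_comb:
  assumes "orthonormal_basis N e"
  shows "ip N (basis_comb N e \<kappa>) (basis_comb N e \<kappa>') = (\<Sum>c\<in>{1..N}. \<kappa> c * \<kappa>' c)"
proof -
  have "ip N (basis_comb N e \<kappa>') (e c) = \<kappa>' c" if c: "c \<in> {1..N}" for c
  proof -
    have "ip N (basis_comb N e \<kappa>') (e c) = (\<Sum>d\<in>{1..N}. \<kappa>' d * ip N (e c) (e d))"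
      by (rule ip_basis_comb)
    also have "\<dots> = (\<Sum>d\<in>{1..N}. if d = c then \<kappa>' c else 0)"
      using orthonormal_basis_ip[OF assms c] by (intro sum.cong) auto
    finally show ?thesis
      using c by simp
  qed
  then show ?thesis
    by (simp add: ip_basis_comb)
qed

definition basis_diff :: "nat \<Rightarrow> (nat \<Rightarrow> nat \<Rightarrow> int) \<Rightarrow> nat \<Rightarrow> nat set \<Rightarrow> nat \<Rightarrow> int" where
  "basis_diff N e s T = basis_comb N e (\<lambda>c. (if c = s then 1 else 0) - (if c \<in> T then 1 else 0))"

lemma sum_delta_minus_indicator:
  assumes "finite A" "s \<in> A" "T \<subseteq> A"
  shows "(\<Sum>c\<in>A. ((if c = s then 1 else 0) - (if c \<in> T then 1 else 0)) * (X c :: int)) = X s - (\<Sum>c\<in>T. X c)"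
proof -
  have "(\<Sum>c\<in>A. (if c \<in> T then 1 else 0) * X c) = (\<Sum>c\<in>A. if c \<in> T then X c else 0)"
    by (intro sum.cong) auto
  also have "\<dots> = (\<Sum>c\<in>T. X c)"
    using assms by (simp add: sum.If_cases Int_absorb1)
  finally show ?thesis
    using assms by (simp add: left_diff_distrib sum_subtractf if_distrib[of "\<lambda>x. x * _"] cong: if_cong)
qed

lemma ip_basis_diff:
  assumes "s \<in> {1..N}" "T \<subseteq> {1..N}"
  shows "ip N (basis_diff N e s T) u = ip N u (e s) - (\<Sum>c\<in>T. ip N u (e c))"
  unfolding basis_diff_def ip_basis_comb using assms by (intro sum_delta_minus_indicator) auto

lemma ip_basis_diff_basis_diff:
  assumes "orthonormal_basis N e" "s \<in> {1..N}" "T \<subseteq> {1..N}" "s' \<in> {1..N}" "T' \<subseteq> {1..N}"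
  shows "ip N (basis_diff N e s T) (basis_diff N e s' T') =
    (if s = s' then 1 else 0) - (if s \<in> T' then 1 else 0) - (if s' \<in> T then 1 else 0) + int (card (T \<inter> T'))"
proof -
  let ?\<kappa> = "\<lambda>c. (if c = s' then 1 else 0) - (if c \<in> T' then 1 else 0) :: int"
  have fin: "finite T"
    using assms(3) finite_subset by blast
  have "ip N (basis_diff N e s T) (basis_diff N e s' T') = ?\<kappa> s - (\<Sum>c\<in>T. ?\<kappa> c)"
    unfolding basis_diff_def ip_basis_comb_basis_comb[OF assms(1)]
    using assms(2,3) by (intro sum_delta_minus_indicator) auto
  also have "(\<Sum>c\<in>T. ?\<kappa> c) = (if s' \<in> T then 1 else 0) - int (card (T \<inter> T'))"
    using fin by (simp add: sum_subtractf sum.If_cases Int_commute)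
  finally show ?thesis
    by (auto simp: eq_commute)
qed

section \<open>Continued fractions and coefficient lists\<close>

lemma hjcf_gt_1: "xs \<noteq> [] \<Longrightarrow> \<forall>x\<in>set xs. x \<ge> 2 \<Longrightarrow> hjcf xs > 1"
proof (induction xs rule: hjcf.induct)
  case (3 x y ys)
  then have "1 / hjcf (y # ys) < 1"
    by simp
  moreover have "of_int x \<ge> (2::rat)"
    using 3(3) by simp
  ultimately show ?case
    by simp
qed simp_all

lemma sum_squares_eq_length_iff:
  fixes xs :: "int list"
  assumes "\<forall>x\<in>set xs. x > 0"
  shows "(\<Sum>x\<leftarrow>xs. x^2) = int (length xs) \<longleftrightarrow> stable_coeffs xs = []"
  using assms
proof (induction xs)
  case (Cons x xs)
  have ge: "(\<Sum>y\<leftarrow>xs. y^2) \<ge> int (length xs)"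
  proof -
    have "(\<Sum>y\<leftarrow>xs. y^2) \<ge> (\<Sum>y\<leftarrow>xs. 1)"
      by (rule sum_list_mono) (use Cons.prems one_le_square_if_nonzero in force)
    then show ?thesis
      by (simp add: sum_list_triv)
  qed
  show ?case
  proof (cases "x > 1")
    case True
    then have "x^2 > 1"
      by simp
    then have "x^2 + (\<Sum>y\<leftarrow>xs. y^2) \<noteq> 1 + int (length xs)"
      using ge by linarith
    then show ?thesis
      using True by (simp add: stable_coeffs_def)
  next
    case False
    then have "x = 1"
      using Cons.prems by simp
    then show ?thesis
      using Cons by (simp add: stable_coeffs_def)
  qed
qed (simp add: stable_coeffs_def)

lemma mset_eq_ones_plus_stable_coeffs:
  assumes "\<forall>x\<in>set \<sigma>. (x::int) > 0"
  shows "mset \<sigma> = replicate_mset (length \<sigma> - length (stable_coeffs \<sigma>)) 1 + mset (stable_coeffs \<sigma>)"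
proof -
  have "filter (\<lambda>x. \<not> x > 1) \<sigma> = replicate (length (filter (\<lambda>x. \<not> x > 1) \<sigma>)) 1"
    by (rule replicate_length_same[symmetric]) (use assms in auto)
  moreover have "length \<sigma> = length (stable_coeffs \<sigma>) + length (filter (\<lambda>x. \<not> x > 1) \<sigma>)"
    unfolding stable_coeffs_def by (rule sum_length_filter_compl[symmetric])
  ultimately show ?thesis
    unfolding stable_coeffs_def
    by (metis add.commute add_diff_cancel_right' mset_filter mset_replicate multiset_partition)
qed

lemma sorted_eq_if_stable_coeffs_eq:
  assumes "sorted \<sigma>" "sorted \<sigma>'" "\<forall>x\<in>set \<sigma>. x > 0" "\<forall>x\<in>set \<sigma>'. x > 0"
    and "length \<sigma> = length \<sigma>'" "mset (stable_coeffs \<sigma>) = mset (stable_coeffs \<sigma>')"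
  shows "\<sigma> = \<sigma>'"
proof -
  have "length (stable_coeffs \<sigma>) = length (stable_coeffs \<sigma>')"
    using assms(6) by (metis size_mset)
  then have "mset \<sigma> = mset \<sigma>'"
    using mset_eq_ones_plus_stable_coeffs[OF assms(3)] mset_eq_ones_plus_stable_coeffs[OF assms(4)] assms(5,6)
    by simp
  then show ?thesis
    using properties_for_sort[of \<sigma> \<sigma>'] sorted_sort_id assms(1,2) by metis
qed

lemma sorted_le_last: "sorted xs \<Longrightarrow> x \<in> set xs \<Longrightarrow> x \<le> last xs"
proof (induction xs)
  case (Cons y ys)
  show ?case
  proof (cases "ys = []")
    case False
    then have "y \<le> last ys"
      using Cons.prems(1) by simp
    then show ?thesis
      using Cons False by auto
  qed (use Cons in simp)
qed simp

section \<open>A single changemaker lattice\<close>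

definition w0_coeff :: "int list \<Rightarrow> nat \<Rightarrow> nat \<Rightarrow> int" where
  "w0_coeff \<sigma> l c =
     (if 1 \<le> c \<and> c \<le> length \<sigma> then \<sigma> ! (c - 1) else if c = length \<sigma> + 1 \<and> l > 0 then 1 else 0)"

locale cm_lattice =
  fixes N :: nat and r :: rat and a :: "int list" and w e :: "nat \<Rightarrow> nat \<Rightarrow> int" and \<sigma> :: "int list"
  assumes cm_data: "cm_data N r a w e \<sigma>"
begin

abbreviation "l \<equiv> length a - 1"
abbreviation "t \<equiv> length \<sigma>"
abbreviation "W c \<equiv> ip N (w 0) (e c)"

lemmas cm_facts = cm_data[unfolded cm_data_def Let_def]

lemma a_ne_Nil: "a \<noteq> []"
  using cm_facts by (elim conjE) simp

lemma hjcf_a: "hjcf a = r"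
  using cm_facts by (elim conjE) simp

lemma a_tail_ge_2: "\<forall>i\<in>{1..l}. a ! i \<ge> 2"
  using cm_facts by (elim conjE) simp

lemma onb: "orthonormal_basis N e"
  using cm_facts by (elim conjE) simp

lemma w_ZN: "k \<le> l \<Longrightarrow> w k \<in> ZN N"
  using cm_facts by (elim conjE) simp

lemma w_norm: "k \<le> l \<Longrightarrow> ip N (w k) (w k) = a ! k"
  using cm_facts by (elim conjE) simp

lemma w_adjacent: "j + 1 = k \<Longrightarrow> k \<le> l \<Longrightarrow> ip N (w j) (w k) = -1"
  using cm_facts by (elim conjE) simp

lemma w_far: "j + 1 < k \<Longrightarrow> k \<le> l \<Longrightarrow> ip N (w j) (w k) = 0"
  using cm_facts by (elim conjE) simp

lemma sigma_sorted: "sorted \<sigma>"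
  using cm_facts by (elim conjE) simp

lemma sigma_pos: "\<forall>x\<in>set \<sigma>. x > 0"
  using cm_facts by (elim conjE) simp

lemma w0_eq:
  "if l = 0 then t \<le> N \<and> w 0 = (\<lambda>c. \<Sum>i<t. \<sigma> ! i * e (i + 1) c)
   else t + 1 \<le> N \<and> w 0 = (\<lambda>c. e (t + 1) c + (\<Sum>i<t. \<sigma> ! i * e (i + 1) c))"
  using cm_facts by (elim conjE) simp

lemma coord_abs_le_1: "k \<in> {1..l} \<Longrightarrow> c \<in> {1..N} \<Longrightarrow> \<bar>ip N (w k) (e c)\<bar> \<le> 1"
  using cm_facts by (elim conjE) simp

lemma w_ip_overlap:
  "j < k \<Longrightarrow> k \<le> l \<Longrightarrow>
    ip N (w j) (w k) = - int (card {c\<in>{1..N}. ip N (w j) (e c) \<noteq> 0 \<and> ip N (w k) (e c) \<noteq> 0})"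
  using cm_facts by (elim conjE) simp

lemma coord_covered: "c \<in> {1..N} \<Longrightarrow> \<exists>k\<le>l. ip N (w k) (e c) \<noteq> 0"
  using cm_facts by (elim conjE) simp

lemma t_le_N: "t \<le> N" "l > 0 \<Longrightarrow> t + 1 \<le> N"
  using w0_eq by (auto split: if_splits)

lemma W_eq:
  assumes c: "c \<in> {1..N}"
  shows "W c = w0_coeff \<sigma> l c"
proof -
  have sigma_part: "(\<Sum>i<t. \<sigma> ! i * ip N (e c) (e (i + 1))) = (if 1 \<le> c \<and> c \<le> t then \<sigma> ! (c - 1) else 0)"
  proof -
    have "(\<Sum>i<t. \<sigma> ! i * ip N (e c) (e (i + 1))) = (\<Sum>i<t. if i = c - 1 \<and> 1 \<le> c then \<sigma> ! (c - 1) else 0)"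
      using orthonormal_basis_ip[OF onb c] t_le_N(1) c by (intro sum.cong) auto
    also have "\<dots> = (if 1 \<le> c \<and> c \<le> t then \<sigma> ! (c - 1) else 0)"
      using c by (auto simp: sum.delta')
    finally show ?thesis .
  qed
  show ?thesis
  proof (cases "l = 0")
    case True
    then have "w 0 = (\<lambda>c. \<Sum>i<t. \<sigma> ! i * e (i + 1) c)"
      using w0_eq by auto
    then have "W c = (\<Sum>i<t. \<sigma> ! i * ip N (e c) (e (i + 1)))"
      by (subst ip_commute) (simp add: ip_sum_right)
    then show ?thesis
      using sigma_part True unfolding w0_coeff_def by simp
  next
    case False
    then have "w 0 = (\<lambda>c. e (t + 1) c + (\<Sum>i<t. \<sigma> ! i * e (i + 1) c))"
      using w0_eq by auto
    then have "W c = ip N (e c) (e (t + 1)) + (\<Sum>i<t. \<sigma> ! i * ip N (e c) (e (i + 1)))"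
      by (subst ip_commute) (simp add: ip_add_right ip_sum_right)
    moreover have "ip N (e c) (e (t + 1)) = (if c = t + 1 then 1 else 0)"
      using orthonormal_basis_ip[OF onb c, of "t + 1"] t_le_N False by auto
    ultimately show ?thesis
      using sigma_part False c unfolding w0_coeff_def by auto
  qed
qed

lemma W_nonneg: "c \<in> {1..N} \<Longrightarrow> W c \<ge> 0"
  using W_eq sigma_pos by (auto simp: w0_coeff_def less_imp_le)

lemma W_pos: "c \<in> {1..t} \<Longrightarrow> W c \<ge> 1"
proof -
  assume c: "c \<in> {1..t}"
  then have "W c = \<sigma> ! (c - 1)"
    using W_eq t_le_N by (simp add: w0_coeff_def)
  moreover have "\<sigma> ! (c - 1) \<in> set \<sigma>"
    using c by auto
  ultimately show ?thesis
    using sigma_pos by force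
qed

definition supp :: "nat set" where
  "supp = {c\<in>{1..N}. W c \<noteq> 0}"

lemma supp_eq: "supp = {1..t} \<union> (if l > 0 then {t + 1} else {})"
proof
  show "supp \<subseteq> {1..t} \<union> (if l > 0 then {t + 1} else {})"
    unfolding supp_def using W_eq by (auto simp: w0_coeff_def split: if_splits)
  show "{1..t} \<union> (if l > 0 then {t + 1} else {}) \<subseteq> supp"
  proof
    fix c assume c: "c \<in> {1..t} \<union> (if l > 0 then {t + 1} else {})"
    show "c \<in> supp"
    proof (cases "c \<in> {1..t}")
      case True
      then show ?thesis
        using W_pos[OF True] t_le_N unfolding supp_def by auto
    next
      case False
      then have "l > 0" "c = t + 1"
        using c by (auto split: if_splits)
      then show ?thesis
        using t_le_N W_eq[of c] unfolding supp_def by (auto simp: w0_coeff_def)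
    qed
  qed
qed

lemma mset_W_supp: "image_mset W (mset_set supp) = mset \<sigma> + (if l > 0 then {#1#} else {#})"
proof -
  have "mset_set {1..t} = image_mset Suc (mset_set {0..<t})"
    by (simp add: image_mset_mset_set image_Suc_atLeastLessThan atLeastLessThanSuc_atLeastAtMost)
  moreover have "image_mset W (mset_set {1..t}) = image_mset (\<lambda>c. \<sigma> ! (c - 1)) (mset_set {1..t})"
    using W_eq t_le_N by (intro image_mset_cong) (auto simp: w0_coeff_def)
  moreover have "image_mset (nth \<sigma>) (mset [0..<t]) = mset \<sigma>"
    by (metis map_nth mset_map)
  ultimately have sigma: "image_mset W (mset_set {1..t}) = mset \<sigma>"
    by (simp add: image_mset.compositionality o_def)
  show ?thesis
  proof (cases "l > 0")
    case True
    then have "mset_set supp = mset_set {1..t} + mset_set {t + 1}" "W (t + 1) = 1"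
      using supp_eq W_eq[of "t + 1"] t_le_N by (simp_all add: mset_set_Union w0_coeff_def)
    then show ?thesis
      using sigma True by simp
  qed (use sigma supp_eq in simp)
qed

lemma a0_eq_sum_squares: "a ! 0 = (\<Sum>c\<in>{1..N}. (W c)^2)"
proof -
  have "a ! 0 = ip N (w 0) (w 0)"
    using w_norm by simp
  also have "\<dots> = (\<Sum>c=1..N. W c * W c)"
    by (rule ip_eq_sum_coords[OF onb]) (use w_ZN in simp)
  finally show ?thesis
    by (simp add: power2_eq_square)
qed

lemma sum_W_supp: "f 0 = (0::int) \<Longrightarrow> (\<Sum>c\<in>{1..N}. f (W c)) = (\<Sum>c\<in>supp. f (W c))"
  unfolding supp_def by (intro sum.mono_neutral_right) auto

lemma a0_eq_sum_squares_sigma: "a ! 0 = (\<Sum>x\<leftarrow>\<sigma>. x^2) + (if l > 0 then 1 else 0)"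
proof -
  have "a ! 0 = (\<Sum>c\<in>supp. (W c)^2)"
    using a0_eq_sum_squares sum_W_supp[of "\<lambda>x. x^2"] by simp
  also have "\<dots> = sum_mset (image_mset (\<lambda>x. x^2) (image_mset W (mset_set supp)))"
    by (simp add: sum_unfold_sum_mset image_mset.compositionality o_def)
  also have "\<dots> = (\<Sum>x\<leftarrow>\<sigma>. x^2) + (if l > 0 then 1 else 0)"
    unfolding mset_W_supp by (simp flip: sum_mset_sum_list)
  finally show ?thesis .
qed

lemma r_le_a0: "r \<le> of_int (a ! 0)" "l > 0 \<Longrightarrow> r < of_int (a ! 0)"
proof -
  obtain a0 rest where a: "a = a0 # rest"
    using a_ne_Nil by (cases a) auto
  show less: "r < of_int (a ! 0)" if pos: "l > 0"
  proof -
    obtain a1 rest' where rest: "rest = a1 # rest'"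
      using a pos by (cases rest) auto
    have "\<forall>x\<in>set rest. x \<ge> 2"
    proof
      fix x assume "x \<in> set rest"
      then obtain i where "i < length rest" "rest ! i = x"
        by (auto simp: in_set_conv_nth)
      then show "x \<ge> 2"
        using a_tail_ge_2 a by force
    qed
    then have "hjcf rest > 1"
      using hjcf_gt_1 rest by blast
    then show ?thesis
      using hjcf_a a rest by auto
  qed
  show "r \<le> of_int (a ! 0)"
    using less hjcf_a a by (cases "l > 0") auto
qed

definition coord_supp :: "nat \<Rightarrow> nat set" where
  "coord_supp k = {c\<in>{1..N}. ip N (w k) (e c) \<noteq> 0}"

lemma finite_coord_supp: "finite (coord_supp k)"
  unfolding coord_supp_def by simp

lemma coord_supp_subset: "coord_supp k \<subseteq> {1..N}"
  unfolding coord_supp_def by auto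

lemma w_ip_eq_card_overlap:
  assumes "j < k" "k \<le> l"
  shows "ip N (w j) (w k) = - int (card (coord_supp j \<inter> coord_supp k))"
proof -
  have "{c\<in>{1..N}. ip N (w j) (e c) \<noteq> 0 \<and> ip N (w k) (e c) \<noteq> 0} = coord_supp j \<inter> coord_supp k"
    unfolding coord_supp_def by auto
  then show ?thesis
    using w_ip_overlap[OF assms] by simp
qed

lemma coord_supp_far_disjoint: "j + 1 < k \<Longrightarrow> k \<le> l \<Longrightarrow> coord_supp j \<inter> coord_supp k = {}"
  using w_far w_ip_eq_card_overlap[of j k] finite_coord_supp by simp

lemma card_coord_supp_adjacent: "j + 1 = k \<Longrightarrow> k \<le> l \<Longrightarrow> card (coord_supp j \<inter> coord_supp k) = 1"
  using w_adjacent[of j k] w_ip_eq_card_overlap[of j k] by simp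

lemma coord_supp_0_meets_only_1:
  "c \<in> coord_supp 0 \<Longrightarrow> c \<in> coord_supp k \<Longrightarrow> k \<in> {1..l} \<Longrightarrow> k = 1"
  using coord_supp_far_disjoint[of 0 k] by (cases "k = 1") auto

lemma card_coord_supp: "k \<in> {1..l} \<Longrightarrow> int (card (coord_supp k)) = a ! k"
proof -
  assume k: "k \<in> {1..l}"
  have "a ! k = (\<Sum>c=1..N. ip N (w k) (e c) * ip N (w k) (e c))"
    using w_norm k ip_eq_sum_coords[OF onb w_ZN] by simp
  also have "\<dots> = (\<Sum>c=1..N. if c \<in> coord_supp k then 1 else 0)"
    using coord_abs_le_1[OF k] abs_le_1_mult_self unfolding coord_supp_def by (intro sum.cong) auto
  also have "\<dots> = int (card (coord_supp k))"
    using coord_supp_subset[of k] by (simp add: sum.If_cases Int_absorb1)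
  finally show ?thesis
    by simp
qed

lemma card_Union_coord_supp:
  "m \<le> l \<Longrightarrow> int (card (\<Union>k\<le>m. coord_supp k)) = (\<Sum>k\<le>m. int (card (coord_supp k))) - int m"
proof (induction m)
  case (Suc m)
  have "(\<Union>k\<le>m. coord_supp k) \<inter> coord_supp (Suc m) = coord_supp m \<inter> coord_supp (Suc m)"
    using coord_supp_far_disjoint[of _ "Suc m"] Suc.prems by (fastforce simp: le_less)
  moreover have "card (\<Union>k\<le>m. coord_supp k) + card (coord_supp (Suc m)) =
      card ((\<Union>k\<le>m. coord_supp k) \<union> coord_supp (Suc m)) + card ((\<Union>k\<le>m. coord_supp k) \<inter> coord_supp (Suc m))"
    by (rule card_Un_Int) (simp_all add: finite_coord_supp)
  moreover have "card (coord_supp m \<inter> coord_supp (Suc m)) = 1"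
    using card_coord_supp_adjacent Suc.prems by auto
  moreover have "(\<Union>k\<le>Suc m. coord_supp k) = (\<Union>k\<le>m. coord_supp k) \<union> coord_supp (Suc m)"
    by (auto simp: atMost_Suc)
  ultimately show ?case
    using Suc by simp
qed simp

lemma N_eq: "int N = int t + (if l > 0 then 1 else 0) + (\<Sum>k\<in>{1..l}. a ! k) - int l"
proof -
  have "(\<Union>k\<le>l. coord_supp k) = {1..N}"
    using coord_supp_subset coord_covered unfolding coord_supp_def by fastforce
  then have "int N = (\<Sum>k\<le>l. int (card (coord_supp k))) - int l"
    using card_Union_coord_supp[of l] by simp
  also have "{..l} = insert 0 {1..l}"
    by auto
  moreover have "coord_supp 0 = supp"
    unfolding coord_supp_def supp_def by simp
  ultimately show ?thesis
    using card_coord_supp supp_eq by simp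
qed

lemma stable_coord_orth:
  assumes c: "c \<in> {1..N}" "W c \<ge> 2" and k: "k \<in> {1..l}"
  shows "ip N (w k) (e c) = 0"
proof (rule ccontr)
  assume nz: "ip N (w k) (e c) \<noteq> 0"
  then have k1: "k = 1" and c01: "c \<in> coord_supp 0 \<inter> coord_supp 1"
    using c k coord_supp_0_meets_only_1[of c k] unfolding coord_supp_def by auto
  have "card (coord_supp 0 \<inter> coord_supp 1) = 1"
    using card_coord_supp_adjacent[of 0 1] k k1 by simp
  then obtain x where "coord_supp 0 \<inter> coord_supp 1 = {x}"
    by (rule card_1_singletonE)
  then have I01: "coord_supp 0 \<inter> coord_supp 1 = {c}"
    using c01 by simp
  have "-1 = (\<Sum>x=1..N. W x * ip N (w 1) (e x))"
    using w_adjacent[of 0 1] k k1 ip_eq_sum_coords[OF onb w_ZN] by simp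
  also have "\<dots> = W c * ip N (w 1) (e c) + (\<Sum>x\<in>{1..N}-{c}. W x * ip N (w 1) (e x))"
    using c(1) by (simp add: sum.remove)
  also have "(\<Sum>x\<in>{1..N}-{c}. W x * ip N (w 1) (e x)) = 0"
  proof (rule sum.neutral, rule ballI)
    fix x assume x: "x \<in> {1..N} - {c}"
    then have "x \<notin> coord_supp 0 \<inter> coord_supp 1"
      using I01 by auto
    then show "W x * ip N (w 1) (e x) = 0"
      using x unfolding coord_supp_def by auto
  qed
  finally have "W c * ip N (w 1) (e c) = -1"
    by simp
  moreover have "\<bar>W c\<bar> * \<bar>ip N (w 1) (e c)\<bar> \<ge> 2 * 1"
    using c nz k1 by (intro mult_mono) auto
  ultimately show False
    by (simp add: abs_mult)
qed

definition unit_supp :: "nat set" where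
  "unit_supp = {c\<in>{1..N}. W c = 1}"

definition free_units :: "nat set" where
  "free_units = {c\<in>{1..N}. W c = 1 \<and> (\<forall>k\<in>{1..l}. ip N (w k) (e c) = 0)}"

lemma card_unit_supp_le: "card unit_supp \<le> card free_units + (if l > 0 then 1 else 0)"
proof -
  have "card unit_supp = card (free_units \<union> (unit_supp - free_units))"
    unfolding unit_supp_def free_units_def by (rule arg_cong[where f = card]) auto
  also have "\<dots> \<le> card free_units + card (unit_supp - free_units)"
    by (rule card_Un_le)
  finally have "card unit_supp \<le> card free_units + card (unit_supp - free_units)" .
  moreover have "card (unit_supp - free_units) \<le> (if l > 0 then 1 else 0)"
  proof (cases "l > 0")
    case True
    have "unit_supp - free_units \<subseteq> coord_supp 0 \<inter> coord_supp 1"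
    proof
      fix c assume c: "c \<in> unit_supp - free_units"
      then obtain k where k: "k \<in> {1..l}" "ip N (w k) (e c) \<noteq> 0"
        unfolding unit_supp_def free_units_def by auto
      then have "c \<in> coord_supp 0 \<inter> coord_supp k"
        using c unfolding coord_supp_def unit_supp_def by auto
      then show "c \<in> coord_supp 0 \<inter> coord_supp 1"
        using coord_supp_0_meets_only_1 k(1) by blast
    qed
    then have "card (unit_supp - free_units) \<le> card (coord_supp 0 \<inter> coord_supp 1)"
      by (intro card_mono) (auto simp: finite_coord_supp)
    then show ?thesis
      using card_coord_supp_adjacent[of 0 1] True by simp
  next
    case False
    then have "unit_supp - free_units = {}"
      unfolding unit_supp_def free_units_def by auto
    then show ?thesis
      using False by (simp only: card.empty if_False)
  qed
  ultimately show ?thesis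
    by simp
qed

definition stable_supp :: "nat set" where
  "stable_supp = {c\<in>{1..N}. W c \<ge> 2}"

lemma finite_stable_supp: "finite stable_supp"
  unfolding stable_supp_def by simp

lemma supp_split: "supp = unit_supp \<union> stable_supp" "unit_supp \<inter> stable_supp = {}"
  unfolding supp_def unit_supp_def stable_supp_def using W_nonneg by force+

lemma mset_stable_coeffs: "mset (stable_coeffs \<sigma>) = image_mset W (mset_set stable_supp)"
proof -
  have "mset (stable_coeffs \<sigma>) = filter_mset (\<lambda>x. x > 1) (mset \<sigma> + (if l > 0 then {#1#} else {#}))"
    unfolding stable_coeffs_def by simp
  also have "\<dots> = image_mset W (mset_set {c\<in>supp. W c > 1})"
    unfolding mset_W_supp[symmetric] by (simp add: filter_mset_image_mset supp_def)
  also have "{c\<in>supp. W c > 1} = stable_supp"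
    unfolding supp_def stable_supp_def by auto
  finally show ?thesis .
qed

lemma sum_squares_stable_coeffs: "(\<Sum>x\<leftarrow>stable_coeffs \<sigma>. x^2) = (\<Sum>c\<in>stable_supp. (W c)^2)"
proof -
  have "(\<Sum>x\<leftarrow>stable_coeffs \<sigma>. x^2) = sum_mset (image_mset (\<lambda>x. x^2) (mset (stable_coeffs \<sigma>)))"
    by (simp flip: sum_mset_sum_list)
  also have "\<dots> = (\<Sum>c\<in>stable_supp. (W c)^2)"
    unfolding mset_stable_coeffs by (simp add: sum_unfold_sum_mset image_mset.compositionality o_def)
  finally show ?thesis .
qed

lemma set_stable_coeffs: "set (stable_coeffs \<sigma>) = W ` stable_supp"
  using arg_cong[OF mset_stable_coeffs, of set_mset] finite_stable_supp by simp

lemma W_le_last_stable_coeffs: "c \<in> stable_supp \<Longrightarrow> W c \<le> last (stable_coeffs \<sigma>)"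
proof (rule sorted_le_last)
  show "sorted (stable_coeffs \<sigma>)"
    unfolding stable_coeffs_def using sigma_sorted by (simp add: sorted_wrt_filter)
qed (simp add: set_stable_coeffs)

lemma stable_coeffs_eq_Nil_iff: "stable_coeffs \<sigma> = [] \<longleftrightarrow> stable_supp = {}"
  using set_stable_coeffs by auto

lemma a0_eq_units_plus_stable: "a ! 0 = int (card unit_supp) + (\<Sum>c\<in>stable_supp. (W c)^2)"
proof -
  have "a ! 0 = (\<Sum>c\<in>supp. (W c)^2)"
    using a0_eq_sum_squares sum_W_supp[of "\<lambda>x. x^2"] by simp
  also have "\<dots> = (\<Sum>c\<in>unit_supp. (W c)^2) + (\<Sum>c\<in>stable_supp. (W c)^2)"
    unfolding supp_split(1)
    by (rule sum.union_disjoint) (use supp_split(2) in \<open>auto simp: unit_supp_def finite_stable_supp\<close>)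
  also have "(\<Sum>c\<in>unit_supp. (W c)^2) = (\<Sum>c\<in>unit_supp. 1)"
    unfolding unit_supp_def by (intro sum.cong) auto
  finally show ?thesis
    by simp
qed

lemma card_free_units_ge:
  assumes "stable_coeffs \<sigma> \<noteq> []"
    and "r \<ge> of_int (2 + 2 * last (stable_coeffs \<sigma>) + (\<Sum>x\<leftarrow>stable_coeffs \<sigma>. x^2))"
  shows "2 + 2 * last (stable_coeffs \<sigma>) \<le> int (card free_units)"
proof -
  define M where "M = last (stable_coeffs \<sigma>)"
  define SS where "SS = (\<Sum>c\<in>stable_supp. (W c)^2)"
  have bound: "of_int (2 + 2 * M + SS) \<le> r"
    using assms(2) sum_squares_stable_coeffs unfolding M_def SS_def by simp
  have a0: "a ! 0 = int (card unit_supp) + SS"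
    unfolding SS_def by (rule a0_eq_units_plus_stable)
  show ?thesis
  proof (cases "l > 0")
    case True
    then have "2 + 2 * M + SS < a ! 0"
      using bound r_le_a0(2) by (metis le_less_trans of_int_less_iff)
    then show ?thesis
      using a0 card_unit_supp_le True unfolding M_def by simp
  next
    case False
    then have "2 + 2 * M + SS \<le> a ! 0"
      using bound r_le_a0(1) by (metis order_trans of_int_le_iff)
    then show ?thesis
      using a0 card_unit_supp_le False unfolding M_def by simp
  qed
qed

lemma basis_diff_in_perp:
  assumes s: "s \<in> {1..N}" "W s = int (card T)" "\<forall>k\<in>{1..l}. ip N (w k) (e s) = 0"
    and T: "T \<subseteq> free_units"
  shows "basis_diff N e s T \<in> perp N l w"
proof -
  have TN: "T \<subseteq> {1..N}"
    using T unfolding free_units_def by auto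
  have "ip N (basis_diff N e s T) (w k) = 0" if k: "k \<le> l" for k
  proof (cases "k = 0")
    case True
    have "(\<Sum>c\<in>T. W c) = (\<Sum>c\<in>T. 1)"
      using T unfolding free_units_def by (intro sum.cong) auto
    then show ?thesis
      using True s(2) by (simp add: ip_basis_diff[OF s(1) TN])
  next
    case False
    then have "(\<Sum>c\<in>T. ip N (w k) (e c)) = 0"
      using T k unfolding free_units_def by (intro sum.neutral) auto
    then show ?thesis
      using False s(3) k by (simp add: ip_basis_diff[OF s(1) TN])
  qed
  then show ?thesis
    unfolding perp_def basis_diff_def using basis_comb_ZN[OF onb] by simp
qed

end

section \<open>Two changemaker lattices related by an isometry\<close>

locale cm_isometry =
  S: cm_lattice N r a w e \<sigma> + T: cm_lattice N r a w' e' \<sigma>' for N r a w e \<sigma> w' e' \<sigma>' +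
  fixes \<phi> :: "(nat \<Rightarrow> int) \<Rightarrow> nat \<Rightarrow> int"
  assumes isometry: "isometric_embedding N (perp N S.l w) \<phi>"
    and image: "\<phi> ` perp N S.l w = perp N S.l w'"
begin

lemma length_eq: "length \<sigma> = length \<sigma>'"
  using S.N_eq T.N_eq by simp

lemma stable_coeffs_Nil_transfer:
  assumes "stable_coeffs \<sigma> = []"
  shows "stable_coeffs \<sigma>' = []"
proof -
  have "(\<Sum>x\<leftarrow>\<sigma>'. x^2) = (\<Sum>x\<leftarrow>\<sigma>. x^2)"
    using S.a0_eq_sum_squares_sigma T.a0_eq_sum_squares_sigma by simp
  also have "\<dots> = int (length \<sigma>')"
    using sum_squares_eq_length_iff[OF S.sigma_pos] assms length_eq by simp
  finally show ?thesis
    using sum_squares_eq_length_iff[OF T.sigma_pos] by simp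
qed

definition img_coord :: "(nat \<Rightarrow> int) \<Rightarrow> nat \<Rightarrow> int" where
  "img_coord x d = ip N (\<phi> x) (e' d)"

lemma img_coord_ip:
  assumes "x \<in> perp N S.l w" "x' \<in> perp N S.l w"
  shows "(\<Sum>d\<in>{1..N}. img_coord x d * img_coord x' d) = ip N x x'"
proof -
  have "\<phi> x' \<in> ZN N"
    using isometry assms(2) unfolding isometric_embedding_def by blast
  then have "ip N (\<phi> x) (\<phi> x') = (\<Sum>d\<in>{1..N}. img_coord x d * img_coord x' d)"
    unfolding img_coord_def by (rule ip_eq_sum_coords[OF T.onb])
  moreover have "ip N (\<phi> x) (\<phi> x') = ip N x x'"
    using isometry assms unfolding isometric_embedding_def by blast
  ultimately show ?thesis
    by simp
qed

lemma img_coord_orth: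
  assumes "x \<in> perp N S.l w" "m \<le> S.l"
  shows "(\<Sum>d\<in>{1..N}. img_coord x d * ip N (w' m) (e' d)) = 0"
proof -
  have "\<phi> x \<in> perp N S.l w'"
    using image assms(1) by blast
  then have "ip N (\<phi> x) (w' m) = 0"
    using assms(2) unfolding perp_def by blast
  moreover have "ip N (\<phi> x) (w' m) = (\<Sum>d\<in>{1..N}. img_coord x d * ip N (w' m) (e' d))"
    unfolding img_coord_def by (rule ip_eq_sum_coords[OF T.onb T.w_ZN[OF assms(2)]])
  ultimately show ?thesis
    by simp
qed

end

locale cm_test_vectors = cm_isometry +
  fixes i0 :: nat and Ts :: "nat \<Rightarrow> nat set"
  assumes i0: "i0 \<in> S.free_units"
    and Ts: "\<forall>s\<in>S.stable_supp. Ts s \<subseteq> S.free_units - {i0} \<and> int (card (Ts s)) = S.W s"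
    and free_units_large: "\<forall>s\<in>S.stable_supp. 2 * S.W s + 2 \<le> int (card S.free_units)"
    and stable_nonempty: "S.stable_supp \<noteq> {}"
begin

definition J :: "nat set" where
  "J = S.free_units - {i0}"

definition u :: "nat \<Rightarrow> nat \<Rightarrow> int" where
  "u j = img_coord (basis_diff N e j {i0})"

definition z :: "nat \<Rightarrow> nat \<Rightarrow> int" where
  "z s = img_coord (basis_diff N e s (Ts s))"

lemma free_units_N: "S.free_units \<subseteq> {1..N}" and stable_supp_N: "S.stable_supp \<subseteq> {1..N}"
  unfolding S.free_units_def S.stable_supp_def by auto

lemma finite_J: "finite J"
  unfolding J_def S.free_units_def by simp

lemma card_J: "int (card J) + 1 = int (card S.free_units)"
proof -
  have "card S.free_units > 0"
    using i0 finite_subset[OF free_units_N] card_gt_0_iff by blast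
  then show ?thesis
    unfolding J_def using card_Diff_singleton[OF i0] by (simp add: of_nat_diff)
qed

lemma Ts_J: "s \<in> S.stable_supp \<Longrightarrow> Ts s \<subseteq> J" and card_Ts: "s \<in> S.stable_supp \<Longrightarrow> int (card (Ts s)) = S.W s"
  using Ts unfolding J_def by auto

lemma stable_not_free: "s \<in> S.stable_supp \<Longrightarrow> s \<notin> S.free_units"
  unfolding S.stable_supp_def S.free_units_def by auto

lemma v_in_perp: "j \<in> J \<Longrightarrow> basis_diff N e j {i0} \<in> perp N S.l w"
  using i0 free_units_N unfolding J_def by (intro S.basis_diff_in_perp) (auto simp: S.free_units_def)

lemma y_in_perp: "s \<in> S.stable_supp \<Longrightarrow> basis_diff N e s (Ts s) \<in> perp N S.l w"
  using stable_supp_N Ts_J card_Ts S.stable_coord_orth unfolding J_def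
  by (intro S.basis_diff_in_perp) (auto simp: S.stable_supp_def)

lemma u_ip:
  assumes "j \<in> J" "k \<in> J"
  shows "(\<Sum>d\<in>{1..N}. u j d * u k d) = (if j = k then 2 else 1)"
proof -
  have "(\<Sum>d\<in>{1..N}. u j d * u k d) = ip N (basis_diff N e j {i0}) (basis_diff N e k {i0})"
    unfolding u_def using assms by (intro img_coord_ip v_in_perp)
  also have "\<dots> = (if j = k then 2 else 1)"
    using assms free_units_N i0 by (subst ip_basis_diff_basis_diff[OF S.onb]) (auto simp: J_def)
  finally show ?thesis .
qed

lemma z_u_ip:
  assumes "s \<in> S.stable_supp" "j \<in> J"
  shows "(\<Sum>d\<in>{1..N}. z s d * u j d) = - (if j \<in> Ts s then 1 else 0)"
proof -
  have "(\<Sum>d\<in>{1..N}. z s d * u j d) = ip N (basis_diff N e s (Ts s)) (basis_diff N e j {i0})"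
    unfolding u_def z_def using assms by (intro img_coord_ip v_in_perp y_in_perp)
  also have "\<dots> = - (if j \<in> Ts s then 1 else 0)"
    using assms free_units_N stable_supp_N Ts_J[OF assms(1)] stable_not_free[OF assms(1)] i0
    by (subst ip_basis_diff_basis_diff[OF S.onb]) (auto simp: J_def)
  finally show ?thesis .
qed

lemma z_z_ip:
  assumes "s \<in> S.stable_supp" "s' \<in> S.stable_supp"
  shows "(\<Sum>d\<in>{1..N}. z s d * z s' d) = (if s = s' then 1 else 0) + int (card (Ts s \<inter> Ts s'))"
proof -
  have "(\<Sum>d\<in>{1..N}. z s d * z s' d) = ip N (basis_diff N e s (Ts s)) (basis_diff N e s' (Ts s'))"
    unfolding z_def using assms by (intro img_coord_ip y_in_perp)
  also have "\<dots> = (if s = s' then 1 else 0) + int (card (Ts s \<inter> Ts s'))"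
    using assms free_units_N stable_supp_N Ts_J[OF assms(1)] Ts_J[OF assms(2)] stable_not_free[OF assms(1)]
      stable_not_free[OF assms(2)]
    by (subst ip_basis_diff_basis_diff[OF S.onb]) (auto simp: J_def)
  finally show ?thesis .
qed

lemma card_J_ge_4: "card J \<ge> 4"
proof -
  obtain s where "s \<in> S.stable_supp"
    using stable_nonempty by blast
  then have "2 * S.W s + 2 \<le> int (card J) + 1" "S.W s \<ge> 2"
    using free_units_large card_J unfolding S.stable_supp_def by auto
  then show ?thesis
    by linarith
qed

definition pivot_data :: "nat \<Rightarrow> int \<Rightarrow> (nat \<Rightarrow> nat) \<Rightarrow> (nat \<Rightarrow> int) \<Rightarrow> bool" where
  "pivot_data p \<alpha> h \<beta> \<longleftrightarrow> p \<in> {1..N} \<and> \<bar>\<alpha>\<bar> = 1 \<and> inj_on h J \<and>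
     (\<forall>j\<in>J. h j \<in> {1..N} \<and> h j \<noteq> p \<and> \<bar>\<beta> j\<bar> = 1 \<and> (\<forall>x\<in>{1..N}. u j x = two_coord \<alpha> p (\<beta> j) (h j) x))"

lemma pivot_data_exists: "\<exists>p \<alpha> h \<beta>. pivot_data p \<alpha> h \<beta>"
proof -
  have "\<forall>j\<in>J. (\<Sum>x\<in>{1..N}. (u j x)^2) = 2"
    using u_ip by (simp add: power2_eq_square)
  moreover have "\<forall>j\<in>J. \<forall>k\<in>J. j \<noteq> k \<longrightarrow> (\<Sum>x\<in>{1..N}. u j x * u k x) = 1"
    using u_ip by simp
  ultimately obtain p \<alpha> h \<beta> where "p \<in> {1..N}" "\<bar>\<alpha>\<bar> = 1" "inj_on h J"
    "\<forall>j\<in>J. h j \<in> {1..N} \<and> h j \<noteq> p \<and> \<bar>\<beta> j\<bar> = 1 \<and> (\<forall>x\<in>{1..N}. u j x = two_coord \<alpha> p (\<beta> j) (h j) x)"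
    by (rule norm_two_family_pivot[OF finite_atLeastAtMost finite_J card_J_ge_4])
  then show ?thesis
    unfolding pivot_data_def by blast
qed

lemma z_shape_exists:
  assumes "pivot_data p \<alpha> h \<beta>"
  shows "\<exists>g \<gamma>. \<forall>s\<in>S.stable_supp. g s \<in> {1..N} \<and> g s \<noteq> p \<and> g s \<notin> h`J \<and> \<bar>\<gamma> s\<bar> = 1 \<and>
    (\<forall>Y. (\<Sum>x\<in>{1..N}. z s x * Y x) = \<gamma> s * Y (g s) - (\<Sum>j\<in>Ts s. \<beta> j * Y (h j)))"
proof -
  have "\<exists>g \<gamma>. g \<in> {1..N} \<and> g \<noteq> p \<and> g \<notin> h`J \<and> \<bar>\<gamma>\<bar> = 1 \<and>
      (\<forall>Y. (\<Sum>x\<in>{1..N}. z s x * Y x) = \<gamma> * Y g - (\<Sum>j\<in>Ts s. \<beta> j * Y (h j)))"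
    if s: "s \<in> S.stable_supp" for s
  proof -
    have "2 * card (Ts s) + 1 \<le> card J"
      using free_units_large s card_Ts[OF s] card_J by auto
    moreover have "(\<Sum>x\<in>{1..N}. (z s x)^2) = int (card (Ts s)) + 1"
      using z_z_ip[OF s s] by (simp add: power2_eq_square)
    moreover have "\<forall>j\<in>J. (\<Sum>x\<in>{1..N}. z s x * u j x) = - (if j \<in> Ts s then 1 else 0)"
      using z_u_ip[OF s] by blast
    moreover note piv = assms[unfolded pivot_data_def]
    ultimately obtain g \<gamma> where "g \<in> {1..N}" "g \<noteq> p" "g \<notin> h`J" "\<bar>\<gamma>\<bar> = 1"
      "\<forall>Y. (\<Sum>x\<in>{1..N}. z s x * Y x) = \<gamma> * Y g - (\<Sum>j\<in>Ts s. \<beta> j * Y (h j))"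
      using norm_against_pivot_family[OF finite_atLeastAtMost _ _ _ finite_J _ Ts_J[OF s]] by blast
    then show ?thesis
      by blast
  qed
  then have "\<forall>s\<in>S.stable_supp. \<exists>g \<gamma>. g \<in> {1..N} \<and> g \<noteq> p \<and> g \<notin> h`J \<and> \<bar>\<gamma>\<bar> = 1 \<and>
      (\<forall>Y. (\<Sum>x\<in>{1..N}. z s x * Y x) = \<gamma> * Y g - (\<Sum>j\<in>Ts s. \<beta> j * Y (h j)))"
    by blast
  from bchoice[OF this] obtain g where "\<forall>s\<in>S.stable_supp. \<exists>\<gamma>. g s \<in> {1..N} \<and> g s \<noteq> p \<and> g s \<notin> h`J \<and> \<bar>\<gamma>\<bar> = 1 \<and>
      (\<forall>Y. (\<Sum>x\<in>{1..N}. z s x * Y x) = \<gamma> * Y (g s) - (\<Sum>j\<in>Ts s. \<beta> j * Y (h j)))"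
    by (rule exE)
  from bchoice[OF this] obtain \<gamma> where "\<forall>s\<in>S.stable_supp. g s \<in> {1..N} \<and> g s \<noteq> p \<and> g s \<notin> h`J \<and> \<bar>\<gamma> s\<bar> = 1 \<and>
      (\<forall>Y. (\<Sum>x\<in>{1..N}. z s x * Y x) = \<gamma> s * Y (g s) - (\<Sum>j\<in>Ts s. \<beta> j * Y (h j)))"
    by (rule exE)
  then show ?thesis
    by blast
qed

end

locale cm_image_shape = cm_test_vectors +
  fixes p :: nat and \<alpha> :: int and h :: "nat \<Rightarrow> nat" and \<beta> :: "nat \<Rightarrow> int"
    and g :: "nat \<Rightarrow> nat" and \<gamma> :: "nat \<Rightarrow> int"
  assumes pivot: "pivot_data p \<alpha> h \<beta>"
    and z_shape: "\<forall>s\<in>S.stable_supp. g s \<in> {1..N} \<and> g s \<noteq> p \<and> g s \<notin> h`J \<and> \<bar>\<gamma> s\<bar> = 1 \<and>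
      (\<forall>Y. (\<Sum>x\<in>{1..N}. z s x * Y x) = \<gamma> s * Y (g s) - (\<Sum>j\<in>Ts s. \<beta> j * Y (h j)))"
begin

lemma p_N: "p \<in> {1..N}" and alpha_abs: "\<bar>\<alpha>\<bar> = 1" and inj_h: "inj_on h J"
  using pivot unfolding pivot_data_def by auto

lemma h_N: "j \<in> J \<Longrightarrow> h j \<in> {1..N}" and h_ne_p: "j \<in> J \<Longrightarrow> h j \<noteq> p"
  and beta_abs: "j \<in> J \<Longrightarrow> \<bar>\<beta> j\<bar> = 1"
  and u_eq: "j \<in> J \<Longrightarrow> \<forall>x\<in>{1..N}. u j x = two_coord \<alpha> p (\<beta> j) (h j) x"
  using pivot unfolding pivot_data_def by auto

lemma g_N: "s \<in> S.stable_supp \<Longrightarrow> g s \<in> {1..N}" and g_ne_p: "s \<in> S.stable_supp \<Longrightarrow> g s \<noteq> p"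
  and g_notin_h: "s \<in> S.stable_supp \<Longrightarrow> g s \<notin> h`J" and gamma_abs: "s \<in> S.stable_supp \<Longrightarrow> \<bar>\<gamma> s\<bar> = 1"
  and z_eq: "s \<in> S.stable_supp \<Longrightarrow> (\<Sum>x\<in>{1..N}. z s x * Y x) = \<gamma> s * Y (g s) - (\<Sum>j\<in>Ts s. \<beta> j * Y (h j))"
  using z_shape by auto

abbreviation w'_coord :: "nat \<Rightarrow> nat \<Rightarrow> int" where
  "w'_coord m d \<equiv> ip N (w' m) (e' d)"

lemma u_orth:
  assumes "j \<in> J" "m \<le> S.l"
  shows "\<alpha> * w'_coord m p + \<beta> j * w'_coord m (h j) = 0"
proof -
  have "(\<Sum>d\<in>{1..N}. u j d * w'_coord m d) = 0"
    unfolding u_def using assms by (intro img_coord_orth v_in_perp)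
  then show ?thesis
    using sum_mult_two_coord[OF finite_atLeastAtMost p_N h_N[OF assms(1)] h_ne_p[OF assms(1), symmetric]
        u_eq[OF assms(1)], of "w'_coord m"] by simp
qed

lemma z_orth:
  assumes "s \<in> S.stable_supp" "m \<le> S.l"
  shows "\<gamma> s * w'_coord m (g s) = - S.W s * (\<alpha> * w'_coord m p)"
proof -
  have "(\<Sum>d\<in>{1..N}. z s d * w'_coord m d) = 0"
    unfolding z_def using assms by (intro img_coord_orth y_in_perp)
  then have "\<gamma> s * w'_coord m (g s) = (\<Sum>j\<in>Ts s. \<beta> j * w'_coord m (h j))"
    using z_eq[OF assms(1)] by simp
  also have "\<dots> = (\<Sum>j\<in>Ts s. - (\<alpha> * w'_coord m p))"
    using u_orth Ts_J[OF assms(1)] assms(2) by (intro sum.cong) (auto simp: eq_neg_iff_add_eq_0 add.commute)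
  also have "\<dots> = - S.W s * (\<alpha> * w'_coord m p)"
    using card_Ts[OF assms(1)] by simp
  finally show ?thesis .
qed

lemma pivot_orth:
  assumes m: "m \<in> {1..S.l}"
  shows "w'_coord m p = 0"
proof (rule ccontr)
  assume nz: "w'_coord m p \<noteq> 0"
  obtain s where s: "s \<in> S.stable_supp"
    using stable_nonempty by blast
  have W2: "S.W s \<ge> 2"
    using s unfolding S.stable_supp_def by simp
  have "\<bar>w'_coord m (g s)\<bar> \<le> 1"
    using T.coord_abs_le_1 m g_N[OF s] by simp
  then have "\<bar>\<gamma> s * w'_coord m (g s)\<bar> \<le> 1"
    using gamma_abs[OF s] by (simp add: abs_mult)
  moreover have "S.W s * \<bar>w'_coord m p\<bar> \<ge> 2 * 1"
    using W2 nz by (intro mult_mono) auto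
  moreover have "\<bar>- S.W s * (\<alpha> * w'_coord m p)\<bar> = S.W s * \<bar>w'_coord m p\<bar>"
    using W2 alpha_abs by (simp add: abs_mult)
  ultimately show False
    using z_orth[OF s] m by simp
qed

definition scale :: int where
  "scale = T.W p"

lemma scale_pos: "scale \<ge> 1"
proof -
  obtain m where m: "m \<le> S.l" "w'_coord m p \<noteq> 0"
    using T.coord_covered p_N by blast
  then have "m = 0"
    using pivot_orth by (cases m) auto
  then have "scale \<noteq> 0"
    using m unfolding scale_def by simp
  moreover have "scale \<ge> 0"
    using T.W_nonneg p_N unfolding scale_def by blast
  ultimately show ?thesis
    by simp
qed

lemma W'_h: "j \<in> J \<Longrightarrow> T.W (h j) = scale"
proof -
  assume j: "j \<in> J"
  have "\<bar>\<beta> j * T.W (h j)\<bar> = \<bar>\<alpha> * scale\<bar>"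
    using u_orth[OF j, of 0] unfolding scale_def by (simp add: eq_neg_iff_add_eq_0[symmetric])
  then show ?thesis
    using beta_abs[OF j] alpha_abs T.W_nonneg[OF h_N[OF j]] scale_pos by (simp add: abs_mult)
qed

lemma W'_g: "s \<in> S.stable_supp \<Longrightarrow> T.W (g s) = scale * S.W s"
proof -
  assume s: "s \<in> S.stable_supp"
  have "\<bar>\<gamma> s * T.W (g s)\<bar> = \<bar>S.W s * (\<alpha> * scale)\<bar>"
    using z_orth[OF s, of 0] unfolding scale_def by simp
  moreover have "S.W s \<ge> 0"
    using s unfolding S.stable_supp_def by simp
  ultimately show ?thesis
    using gamma_abs[OF s] alpha_abs T.W_nonneg[OF g_N[OF s]] scale_pos by (simp add: abs_mult)
qed

lemma z_at:
  assumes "s \<in> S.stable_supp" "d \<in> {1..N}"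
  shows "z s d = \<gamma> s * (if g s = d then 1 else 0) - (\<Sum>j\<in>Ts s. \<beta> j * (if h j = d then 1 else 0))"
proof -
  have "(\<Sum>x\<in>{1..N}. z s x * (if x = d then 1 else 0)) = z s d"
    using assms(2) by (simp add: if_distrib[of "\<lambda>y. _ * y"] cong: if_cong)
  then show ?thesis
    using z_eq[OF assms(1), of "\<lambda>x. if x = d then 1 else 0"] by simp
qed

lemma z_at_g:
  assumes "s \<in> S.stable_supp"
  shows "z s (g s) = \<gamma> s"
proof -
  have "(\<Sum>j\<in>Ts s. \<beta> j * (if h j = g s then 1 else 0)) = 0"
  proof (intro sum.neutral ballI)
    fix j assume "j \<in> Ts s"
    then have "h j \<noteq> g s"
      using g_notin_h[OF assms] Ts_J[OF assms] by (metis image_eqI subsetD)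
    then show "\<beta> j * (if h j = g s then 1 else 0) = 0"
      by simp
  qed
  then show ?thesis
    using z_at[OF assms g_N[OF assms]] by simp
qed

lemma z_at_h:
  assumes "s \<in> S.stable_supp" "j \<in> J"
  shows "z s (h j) = - (if j \<in> Ts s then \<beta> j else 0)"
proof -
  have "(\<Sum>i\<in>Ts s. \<beta> i * (if h i = h j then 1 else 0)) = (\<Sum>i\<in>Ts s. if i = j then \<beta> j else 0)"
    using Ts_J[OF assms(1)] inj_h assms(2) by (intro sum.cong) (auto dest: inj_onD)
  also have "\<dots> = (if j \<in> Ts s then \<beta> j else 0)"
    using finite_subset[OF Ts_J[OF assms(1)] finite_J] by simp
  finally show ?thesis
    using z_at[OF assms(1) h_N[OF assms(2)]] g_notin_h[OF assms(1)] assms(2) by auto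
qed

lemma inj_g: "inj_on g S.stable_supp"
proof (rule inj_onI, rule ccontr)
  fix s s' assume ss: "s \<in> S.stable_supp" "s' \<in> S.stable_supp" "g s = g s'" "s \<noteq> s'"
  have "(\<Sum>j\<in>Ts s. \<beta> j * z s' (h j)) = (\<Sum>j\<in>Ts s. - (if j \<in> Ts s' then 1 else 0))"
    using Ts_J[OF ss(1)] z_at_h[OF ss(2)] mult_self_eq_1_if_abs_eq_1[OF beta_abs]
    by (intro sum.cong) (auto simp: subset_iff)
  also have "\<dots> = - int (card (Ts s \<inter> Ts s'))"
    using finite_subset[OF Ts_J[OF ss(1)] finite_J] by (simp add: sum_negf sum.If_cases)
  finally have "(\<Sum>d\<in>{1..N}. z s d * z s' d) = \<gamma> s * \<gamma> s' + int (card (Ts s \<inter> Ts s'))"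
    using z_eq[OF ss(1), of "z s'"] z_at_g[OF ss(2)] ss(3) by simp
  then have "\<gamma> s * \<gamma> s' = 0"
    using z_z_ip[OF ss(1,2)] ss(4) by simp
  then show False
    using gamma_abs[OF ss(1)] gamma_abs[OF ss(2)] by auto
qed

definition rest :: "nat set" where
  "rest = {1..N} - ({p} \<union> h`J) - g`S.stable_supp"

lemma a0_decomp:
  "a ! 0 = scale^2 * (1 + int (card J)) + scale^2 * (\<Sum>c\<in>S.stable_supp. (S.W c)^2) + (\<Sum>x\<in>rest. (T.W x)^2)"
proof -
  have "\<forall>j\<in>J. h j \<in> {1..N} \<and> h j \<noteq> p"
    using h_N h_ne_p by blast
  then have "a ! 0 = (T.W p)^2 + (\<Sum>j\<in>J. (T.W (h j))^2) + (\<Sum>x\<in>{1..N} - ({p} \<union> h`J). (T.W x)^2)"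
    unfolding T.a0_eq_sum_squares by (rule sum_split_pivot[OF finite_atLeastAtMost p_N inj_h])
  moreover have "g`S.stable_supp \<subseteq> {1..N} - ({p} \<union> h`J)"
    using g_N g_ne_p g_notin_h by auto
  then have "(\<Sum>x\<in>{1..N} - ({p} \<union> h`J). (T.W x)^2) = (\<Sum>x\<in>rest. (T.W x)^2) + (\<Sum>x\<in>g`S.stable_supp. (T.W x)^2)"
    unfolding rest_def by (intro sum.subset_diff) auto
  moreover have "(\<Sum>x\<in>g`S.stable_supp. (T.W x)^2) = scale^2 * (\<Sum>c\<in>S.stable_supp. (S.W c)^2)"
    using W'_g by (simp add: sum.reindex[OF inj_g] power_mult_distrib sum_distrib_left)
  moreover have "(\<Sum>j\<in>J. (T.W (h j))^2) = int (card J) * scale^2"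
    using W'_h by simp
  ultimately show ?thesis
    unfolding scale_def by (simp add: algebra_simps)
qed

lemma a0_upper: "a ! 0 \<le> int (card J) + 2 + (\<Sum>c\<in>S.stable_supp. (S.W c)^2)"
  using S.a0_eq_units_plus_stable S.card_unit_supp_le card_J by (simp split: if_splits)

lemma scale_eq_1: "scale = 1"
proof (rule ccontr)
  assume "scale \<noteq> 1"
  then have "scale^2 \<ge> 2^2"
    using scale_pos by (intro power_mono) auto
  moreover have SS: "(\<Sum>c\<in>S.stable_supp. (S.W c)^2) \<ge> 0" and "(\<Sum>x\<in>rest. (T.W x)^2) \<ge> 0"
    by (simp_all add: sum_nonneg)
  ultimately have "scale^2 * (1 + int (card J)) \<ge> 4 * (1 + int (card J))"
    and "scale^2 * (\<Sum>c\<in>S.stable_supp. (S.W c)^2) \<ge> 4 * (\<Sum>c\<in>S.stable_supp. (S.W c)^2)"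
    by (intro mult_right_mono; simp)+
  then have "4 * (1 + int (card J)) + 4 * (\<Sum>c\<in>S.stable_supp. (S.W c)^2) \<le>
      scale^2 * (1 + int (card J)) + scale^2 * (\<Sum>c\<in>S.stable_supp. (S.W c)^2)"
    by (rule add_mono)
  also have "\<dots> \<le> a ! 0"
    using a0_decomp \<open>(\<Sum>x\<in>rest. (T.W x)^2) \<ge> 0\<close> by simp
  finally show False
    using a0_upper SS by simp
qed

lemma rest_small: "x \<in> rest \<Longrightarrow> (T.W x)^2 \<le> 1"
proof -
  assume x: "x \<in> rest"
  have "(\<Sum>y\<in>rest. (T.W y)^2) \<le> 1"
    using a0_decomp a0_upper unfolding scale_eq_1 by simp
  moreover have "(T.W x)^2 \<le> (\<Sum>y\<in>rest. (T.W y)^2)"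
    using x by (intro member_le_sum) (auto simp: rest_def)
  ultimately show ?thesis
    by simp
qed

lemma T_stable_supp_eq: "T.stable_supp = g ` S.stable_supp"
proof
  show "g ` S.stable_supp \<subseteq> T.stable_supp"
    using W'_g g_N unfolding scale_eq_1 S.stable_supp_def T.stable_supp_def by auto
  show "T.stable_supp \<subseteq> g ` S.stable_supp"
  proof
    fix x assume x: "x \<in> T.stable_supp"
    then have "x \<noteq> p" "x \<notin> h`J"
      using W'_h scale_eq_1 unfolding scale_def T.stable_supp_def by auto
    moreover have "x \<notin> rest"
    proof
      assume "x \<in> rest"
      then have "(T.W x)^2 \<le> 1"
        by (rule rest_small)
      moreover have "T.W x \<ge> 2"
        using x unfolding T.stable_supp_def by simp
      ultimately show False
        using power_mono[of 2 "T.W x" 2] by simp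
    qed
    ultimately show "x \<in> g ` S.stable_supp"
      using x unfolding rest_def T.stable_supp_def by auto
  qed
qed

lemma mset_stable_coeffs_eq: "mset (stable_coeffs \<sigma>') = mset (stable_coeffs \<sigma>)"
proof -
  have "mset (stable_coeffs \<sigma>') = image_mset T.W (image_mset g (mset_set S.stable_supp))"
    unfolding T.mset_stable_coeffs T_stable_supp_eq image_mset_mset_set[OF inj_g] ..
  also have "\<dots> = image_mset S.W (mset_set S.stable_supp)"
    using W'_g S.finite_stable_supp unfolding scale_eq_1
    by (simp add: image_mset.compositionality o_def) (intro image_mset_cong, simp)
  finally show ?thesis
    unfolding S.mset_stable_coeffs .
qed

end

context cm_test_vectors
begin

lemma stable_coeffs_mset_transfer: "mset (stable_coeffs \<sigma>') = mset (stable_coeffs \<sigma>)"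
proof -
  obtain p \<alpha> h \<beta> where pivot: "pivot_data p \<alpha> h \<beta>"
    using pivot_data_exists by blast
  then obtain g \<gamma> where "\<forall>s\<in>S.stable_supp. g s \<in> {1..N} \<and> g s \<noteq> p \<and> g s \<notin> h`J \<and> \<bar>\<gamma> s\<bar> = 1 \<and>
      (\<forall>Y. (\<Sum>x\<in>{1..N}. z s x * Y x) = \<gamma> s * Y (g s) - (\<Sum>j\<in>Ts s. \<beta> j * Y (h j)))"
    using z_shape_exists by blast
  then interpret cm_image_shape N r a w e \<sigma> w' e' \<sigma>' \<phi> i0 Ts p \<alpha> h \<beta> g \<gamma>
    using pivot by unfold_locales
  show ?thesis
    by (rule mset_stable_coeffs_eq)
qed

end

context cm_isometry
begin

lemma stable_coeffs_mset_eq: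
  assumes "stable_coeffs \<sigma> \<noteq> []"
    and "r \<ge> of_int (2 + 2 * last (stable_coeffs \<sigma>) + (\<Sum>x\<leftarrow>stable_coeffs \<sigma>. x^2))"
  shows "mset (stable_coeffs \<sigma>') = mset (stable_coeffs \<sigma>)"
proof -
  have large: "\<forall>s\<in>S.stable_supp. 2 * S.W s + 2 \<le> int (card S.free_units)"
    using S.card_free_units_ge[OF assms] S.W_le_last_stable_coeffs by fastforce
  have nonempty: "S.stable_supp \<noteq> {}"
    using assms(1) S.stable_coeffs_eq_Nil_iff by simp
  have "card S.free_units > 0"
  proof -
    obtain s where s: "s \<in> S.stable_supp"
      using nonempty by blast
    then have "S.W s \<ge> 2"
      unfolding S.stable_supp_def by simp
    then show ?thesis
      using large s by fastforce
  qed
  then obtain i0 where i0: "i0 \<in> S.free_units"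
    by (metis card_gt_0_iff ex_in_conv)
  have "\<exists>T. T \<subseteq> S.free_units - {i0} \<and> card T = nat (S.W s)" if s: "s \<in> S.stable_supp" for s
  proof -
    have "int (card (S.free_units - {i0})) = int (card S.free_units) - 1"
      using i0 \<open>card S.free_units > 0\<close> by (simp add: card_Diff_singleton of_nat_diff)
    then have "nat (S.W s) \<le> card (S.free_units - {i0})"
      using large s by fastforce
    then show ?thesis
      by (meson obtain_subset_with_card_n)
  qed
  then obtain Ts where "\<forall>s\<in>S.stable_supp. Ts s \<subseteq> S.free_units - {i0} \<and> card (Ts s) = nat (S.W s)"
    by metis
  then have "\<forall>s\<in>S.stable_supp. Ts s \<subseteq> S.free_units - {i0} \<and> int (card (Ts s)) = S.W s"
    unfolding S.stable_supp_def by auto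
  then interpret cm_test_vectors N r a w e \<sigma> w' e' \<sigma>' \<phi> i0 Ts
    using i0 large nonempty by unfold_locales
  show ?thesis
    by (rule stable_coeffs_mset_transfer)
qed

end

theorem lemma3p5:
  fixes N :: nat and r :: rat and a :: "int list"
    and w w' e e' :: "nat \<Rightarrow> nat \<Rightarrow> int" and \<sigma> \<sigma>' :: "int list"
    and \<phi> :: "(nat \<Rightarrow> int) \<Rightarrow> (nat \<Rightarrow> int)"
  assumes L: "cm_data N r a w e \<sigma>"
    and L': "cm_data N r a w' e' \<sigma>'"
    and phi: "isometric_embedding N (perp N (length a - 1) w) \<phi>"
    and img: "\<phi> ` perp N (length a - 1) w = perp N (length a - 1) w'"
    and bound: "r \<ge> of_int (2 + 2 * (if stable_coeffs \<sigma> = [] then 0 else last (stable_coeffs \<sigma>))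
                     + (\<Sum>x\<leftarrow>stable_coeffs \<sigma>. x ^ 2))"
  shows "\<sigma> = \<sigma>'"
proof -
  interpret cm_isometry N r a w e \<sigma> w' e' \<sigma>' \<phi>
    using assms by (simp add: cm_isometry_def cm_isometry_axioms_def cm_lattice_def)
  have "mset (stable_coeffs \<sigma>) = mset (stable_coeffs \<sigma>')"
  proof (cases "stable_coeffs \<sigma> = []")
    case True
    then show ?thesis
      using stable_coeffs_Nil_transfer by simp
  next
    case False
    then show ?thesis
      using stable_coeffs_mset_eq bound by simp
  qed
  then show ?thesis
    using sorted_eq_if_stable_coeffs_eq S.sigma_sorted T.sigma_sorted S.sigma_pos T.sigma_pos length_eq
    by blast
qed

end
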